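(* Let $I$ be a compact interval and $\{B^\epsilon\}_{\epsilon\in I}$ magnetic fields on $\mathcal{X}=\mathbb{R}^n$ with components $B^\epsilon_{jk}\in BC^\infty(\mathcal{X})$ such that $\epsilon\mapsto B^\epsilon_{jk}$ is continuous for the Fréchet topology of $BC^\infty(\mathcal{X})$; write $\diamond^\epsilon:=\diamond^{B^\epsilon}$. Let $I\ni\epsilon\mapsto\phi^\epsilon\in\mathfrak{L}$ be continuous and $\psi\in L^2(\mathcal{X}\times\mathcal{X})$. Then the map $I\ni\epsilon\mapsto\phi^\epsilon\diamond^\epsilon\psi\in L^2(\mathcal{X}\times\mathcal{X})$ is continuous.
   Context: $\mathfrak{L}=L^1(\mathcal{X};BC_u(\mathcal{X}))$ ($BC_u$ = bounded uniformly continuous functions), realized as functions $\phi(x,y)$ with norm $\|\phi\|_{\mathfrak L}=\int_{\mathcal X}dy\sup_{x}|\phi(x,y)|$. For a magnetic field $B$ let $\gamma^B(x,y,z)$ be the flux of $B$ through the triangle with vertices $x,x+y,x+y+z$, $\omega^B(x;y,z)=e^{-i\gamma^B(x,y,z)}$, and for $\phi\in\mathfrak L$, $\psi\in L^2(\mathcal X\times\mathcal X)$: $[\phi\diamond^B\psi](x,y)=\int_{\mathcal X}dz\,\phi(x+\tfrac{z-y}{2},z)\,\psi(x+\tfrac z2,y-z)\,\omega^B(x-\tfrac y2;z,y-z)$. *)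

theory Defs
  imports "HOL-Analysis.Analysis"
begin

fun pd :: "'n::finite list \<Rightarrow> (real^'n \<Rightarrow> real) \<Rightarrow> real^'n \<Rightarrow> real" where
  "pd [] f = f"
| "pd (i # is) f = (\<lambda>x. frechet_derivative (pd is f) (at x) (axis i 1))"

definition BC_inf :: "(real^'n::finite \<Rightarrow> real) \<Rightarrow> bool" where
  "BC_inf f \<longleftrightarrow> (\<forall>is. (\<forall>x. pd is f differentiable (at x)) \<and> bounded (range (pd is f)))"

definition magnetic_field :: "('n::finite \<Rightarrow> 'n \<Rightarrow> real^'n \<Rightarrow> real) \<Rightarrow> bool" where
  "magnetic_field B \<longleftrightarrow>
     (\<forall>j k. BC_inf (B j k)) \<and> (\<forall>j k x. B j k x = - B k j x) \<and>
     (\<forall>j k l x. pd [j] (B k l) x + pd [k] (B l j) x + pd [l] (B j k) x = 0)"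

text \<open>Flux of B through the triangle with vertices x, x+y, x+y+z
  (parametrised by x + s y + t z, 0 <= t <= s <= 1).\<close>
definition gammaB :: "('n::finite \<Rightarrow> 'n \<Rightarrow> real^'n \<Rightarrow> real) \<Rightarrow> real^'n \<Rightarrow> real^'n \<Rightarrow> real^'n \<Rightarrow> real" where
  "gammaB B x y z = integral {0..1} (\<lambda>s. integral {0..s} (\<lambda>t.
      (\<Sum>j\<in>UNIV. \<Sum>k\<in>UNIV. B j k (x + s *\<^sub>R y + t *\<^sub>R z) * (y $ j) * (z $ k))))"

definition omegaB :: "('n::finite \<Rightarrow> 'n \<Rightarrow> real^'n \<Rightarrow> real) \<Rightarrow> real^'n \<Rightarrow> real^'n \<Rightarrow> real^'n \<Rightarrow> complex" where
  "omegaB B x y z = cis (- gammaB B x y z)"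

definition BCu :: "('a::metric_space \<Rightarrow> complex) \<Rightarrow> bool" where
  "BCu g \<longleftrightarrow> bounded (range g) \<and> uniformly_continuous_on UNIV g"

text \<open>Simple BC_u-valued functions y \<mapsto> sum_i 1_{A_i}(y) g_i, realised as functions of (x,y).\<close>
definition simple_Lfrak :: "(real^'n::finite \<Rightarrow> real^'n \<Rightarrow> complex) \<Rightarrow> bool" where
  "simple_Lfrak s \<longleftrightarrow> (\<exists>(m::nat) A g. (\<forall>i<m. A i \<in> sets lebesgue \<and> emeasure lebesgue (A i) < \<infinity> \<and> BCu (g i))
       \<and> (\<forall>x y. s x y = (\<Sum>i<m. indicator (A i) y * g i x)))"

definition Lfrak_norm :: "(real^'n::finite \<Rightarrow> real^'n \<Rightarrow> complex) \<Rightarrow> ennreal" where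
  "Lfrak_norm \<phi> = (\<integral>\<^sup>+ y. (SUP x. ennreal (cmod (\<phi> x y))) \<partial>lebesgue)"

text \<open>Membership in L^1(X; BC_u(X)) (Bochner): every slice is BC_u, the map
  y \<mapsto> phi(.,y) is strongly measurable (a.e. limit of simple functions in sup norm)
  and its norm is integrable.\<close>
definition in_Lfrak :: "(real^'n::finite \<Rightarrow> real^'n \<Rightarrow> complex) \<Rightarrow> bool" where
  "in_Lfrak \<phi> \<longleftrightarrow> (\<forall>y. BCu (\<lambda>x. \<phi> x y)) \<and>
     (\<exists>s::nat \<Rightarrow> real^'n \<Rightarrow> real^'n \<Rightarrow> complex. (\<forall>k. simple_Lfrak (s k)) \<and>
          (AE y in lebesgue. ((\<lambda>k. SUP x. ennreal (cmod (\<phi> x y - s k x y))) \<longlongrightarrow> 0) sequentially)) \<and>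
     Lfrak_norm \<phi> < \<infinity>"

definition L2_norm_sq :: "(real^'n::finite \<Rightarrow> real^'n \<Rightarrow> complex) \<Rightarrow> ennreal" where
  "L2_norm_sq \<psi> = (\<integral>\<^sup>+ p. ennreal ((cmod (\<psi> (fst p) (snd p)))\<^sup>2) \<partial>lebesgue)"

definition in_L2 :: "(real^'n::finite \<Rightarrow> real^'n \<Rightarrow> complex) \<Rightarrow> bool" where
  "in_L2 \<psi> \<longleftrightarrow> (\<lambda>p. \<psi> (fst p) (snd p)) \<in> borel_measurable lebesgue \<and> L2_norm_sq \<psi> < \<infinity>"

definition diamondB :: "('n::finite \<Rightarrow> 'n \<Rightarrow> real^'n \<Rightarrow> real) \<Rightarrow> (real^'n \<Rightarrow> real^'n \<Rightarrow> complex)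
    \<Rightarrow> (real^'n \<Rightarrow> real^'n \<Rightarrow> complex) \<Rightarrow> real^'n \<Rightarrow> real^'n \<Rightarrow> complex" where
  "diamondB B \<phi> \<psi> x y = (LINT z|lebesgue.
      \<phi> (x + (1/2) *\<^sub>R (z - y)) z * \<psi> (x + (1/2) *\<^sub>R z) (y - z) * omegaB B (x - (1/2) *\<^sub>R y) z (y - z))"

end

theory Submission
  imports Defs
begin

text \<open>
  Writing \<open>p = (x, y)\<close>, the magnetic product is \<open>(\<phi> \<diamond>\<^sup>B \<psi>)(p) = \<integral> \<phi>(x + (z - y)/2, z) \<psi>(p + (z/2, -z)) \<omega>\<^sup>B(p, z) dz\<close>
  with a phase of modulus one. Bounding \<open>\<phi>(x + (z - y)/2, z)\<close> by its supremum over the first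
  variable, Cauchy--Schwarz and translation invariance give the Schur-type bound
  \<open>\<parallel>\<phi> \<diamond>\<^sup>B \<psi>\<parallel>\<^sub>2 \<le> \<parallel>\<phi>\<parallel>\<^sub>\<L> \<parallel>\<psi>\<parallel>\<^sub>2\<close>, so the product lies in \<open>L\<^sup>2\<close>.
  For continuity, \<open>\<phi>\<^sup>\<epsilon> \<diamond>\<^sup>\<epsilon> \<psi> - \<phi>\<^sup>\<epsilon>\<^sup>0 \<diamond>\<^sup>\<epsilon>\<^sup>0 \<psi>\<close> is split into a term with \<open>\<phi>\<^sup>\<epsilon> - \<phi>\<^sup>\<epsilon>\<^sup>0\<close>,
  controlled by the Schur bound, and a term in which only the phase changes. Uniform
  convergence of the fields makes the fluxes, hence the phases, converge pointwise, and
  \<open>|\<omega>\<^sup>\<epsilon> - \<omega>\<^sup>\<epsilon>\<^sup>0| \<le> 2\<close> allows dominated convergence, first in \<open>z\<close> and then in \<open>p\<close>.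
\<close>

lemma uniform_limit_at_within_real:
  fixes f :: "real \<Rightarrow> 'a \<Rightarrow> real"
  assumes "\<forall>e>0. \<exists>d>0. \<forall>\<epsilon>\<in>S. \<bar>\<epsilon> - \<epsilon>0\<bar> < d \<longrightarrow> (\<forall>x. \<bar>f \<epsilon> x - g x\<bar> \<le> e)"
  shows "uniform_limit UNIV f g (at \<epsilon>0 within S)"
  unfolding uniform_limit_iff
proof (intro allI impI)
  fix e :: real assume "e > 0"
  then obtain d where "d > 0" and d: "\<forall>\<epsilon>\<in>S. \<bar>\<epsilon> - \<epsilon>0\<bar> < d \<longrightarrow> (\<forall>x. \<bar>f \<epsilon> x - g x\<bar> \<le> e / 2)"
    using assms by (meson half_gt_zero)
  have "\<bar>f \<epsilon> x - g x\<bar> < e" if "\<epsilon> \<in> S" "\<bar>\<epsilon> - \<epsilon>0\<bar> < d" for \<epsilon> x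
  proof -
    have "\<bar>f \<epsilon> x - g x\<bar> \<le> e / 2" using d that by blast
    with \<open>e > 0\<close> show ?thesis by linarith
  qed
  with \<open>d > 0\<close> show "\<forall>\<^sub>F \<epsilon> in at \<epsilon>0 within S. \<forall>x\<in>UNIV. dist (f \<epsilon> x) (g x) < e"
    unfolding eventually_at by (auto simp: dist_real_def)
qed

lemma integral_atLeastAtMost_0_rescale:
  fixes f :: "real \<Rightarrow> real"
  assumes "s \<ge> 0"
  shows "integral {0..s} f = s * integral {0..1} (\<lambda>u. f (s * u))"
proof (cases "s = 0")
  case False
  with assms have s: "s > 0" by simp
  have "(\<lambda>x. x / s) ` {0..s} = {0..1}"
  proof (intro equalityI subsetI)
    fix u :: real assume "u \<in> {0..1}"
    then have "u = (s * u) / s" "s * u \<in> {0..s}" using s by (auto simp: mult_le_cancel_left1)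
    then show "u \<in> (\<lambda>x. x / s) ` {0..s}" by blast
  qed (use s in \<open>auto simp: field_simps\<close>)
  moreover have "integral ((\<lambda>x. x / s) ` {0..s}) (\<lambda>x. f (s * x)) = (1 / \<bar>s\<bar>) *\<^sub>R integral {0..s} f"
    using False by (rule integral_stretch_real)
  ultimately show ?thesis using s by (simp add: field_simps)
qed simp

lemma continuous_on_integral_0_upto:
  fixes K :: "'q::topological_space \<Rightarrow> real \<Rightarrow> real \<Rightarrow> real"
  assumes K: "continuous_on UNIV (\<lambda>(q, s, t). K q s t)"
  shows "continuous_on (UNIV \<times> {0..1}) (\<lambda>(q, s). integral {0..s} (K q s))"
proof -
  have "continuous_on UNIV (\<lambda>x. (\<lambda>(q, s, t). K q s t) (fst (fst x), snd (fst x), snd (fst x) * snd x))"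
    by (rule continuous_on_compose2[OF K]) (auto intro!: continuous_intros)
  then have "continuous_on UNIV (\<lambda>(x, u). (\<lambda>(q, s) u. K q s (s * u)) x u)"
    by (simp add: case_prod_beta)
  then have "continuous_on ((UNIV \<times> {0..1}) \<times> cbox 0 1) (\<lambda>(x, u). (\<lambda>(q, s) u. K q s (s * u)) x u)"
    by (rule continuous_on_subset) auto
  from integral_continuous_on_param[OF this]
  have "continuous_on (UNIV \<times> {0..1}) (\<lambda>(q, s). s * integral {0..1} (\<lambda>u. K q s (s * u)))"
    by (auto intro!: continuous_intros simp: split_beta)
  then show ?thesis
    by (rule continuous_on_cong[THEN iffD1, rotated 2])
      (auto simp: case_prod_beta integral_atLeastAtMost_0_rescale[of _ "K _ _"])
qed

lemma norm_mult_diff_le: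
  fixes a1 a0 q w1 w0 :: "'a::real_normed_field"
  assumes "norm w1 = 1"
  shows "norm (a1 * q * w1 - a0 * q * w0) \<le> norm (a1 - a0) * norm q + norm a0 * norm q * norm (w1 - w0)"
proof -
  have "a1 * q * w1 - a0 * q * w0 = (a1 - a0) * q * w1 + a0 * q * (w1 - w0)"
    by (simp add: algebra_simps)
  then have "norm (a1 * q * w1 - a0 * q * w0) \<le> norm ((a1 - a0) * q * w1) + norm (a0 * q * (w1 - w0))"
    by (metis norm_triangle_ineq)
  then show ?thesis using assms by (simp add: norm_mult)
qed

lemma square_add_le_ennreal: "((a::ennreal) + b)^2 \<le> 2 * a^2 + 2 * b^2"
proof -
  have "(a + b)^2 = a^2 + 2 * a * b + b^2" by (simp add: power2_sum)
  also have "\<dots> \<le> a^2 + (a^2 + b^2) + b^2"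
    by (intro add_mono order_refl sum_of_squares_ge_ennreal)
  also have "\<dots> = 2 * a^2 + 2 * b^2" by (simp add: mult_2 ac_simps)
  finally show ?thesis .
qed

lemma tendsto_of_SUP_norm_diff_tendsto_0:
  fixes f :: "'a \<Rightarrow> 'b::real_normed_vector"
  assumes "((\<lambda>k. SUP x. ennreal (norm (f x - g k x))) \<longlongrightarrow> 0) F"
  shows "((\<lambda>k. g k x) \<longlongrightarrow> f x) F"
proof -
  have "((\<lambda>k. ennreal (norm (f x - g k x))) \<longlongrightarrow> ennreal 0) F"
    by (rule tendsto_sandwich[OF _ _ tendsto_const assms[unfolded ennreal_0[symmetric]]])
      (auto intro!: always_eventually SUP_upper)
  then have "((\<lambda>k. norm (f x - g k x)) \<longlongrightarrow> 0) F"
    by (rule tendsto_ennrealD) auto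
  then have "((\<lambda>k. f x - g k x) \<longlongrightarrow> 0) F"
    by (rule tendsto_norm_zero_cancel)
  from tendsto_diff[OF tendsto_const[of "f x"] this] show ?thesis by simp
qed

lemma SUP_eq_SUP_dense:
  fixes g :: "'a::topological_space \<Rightarrow> 'b::{complete_linorder, linorder_topology}"
  assumes g: "continuous_on UNIV g" and D: "\<And>X. open X \<Longrightarrow> X \<noteq> {} \<Longrightarrow> \<exists>d\<in>D. d \<in> X"
  shows "(SUP w. g w) = (SUP d\<in>D. g d)"
proof (rule antisym)
  show "(SUP d\<in>D. g d) \<le> (SUP w. g w)" by (rule SUP_subset_mono) auto
  show "(SUP w. g w) \<le> (SUP d\<in>D. g d)"
  proof (rule SUP_least, rule ccontr)
    fix w assume "\<not> g w \<le> (SUP d\<in>D. g d)"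
    then have "w \<in> {x. (SUP d\<in>D. g d) < g x}" by auto
    moreover have "open {x. (SUP d\<in>D. g d) < g x}"
      by (rule open_Collect_less) (auto intro: g continuous_on_const)
    ultimately obtain d where "d \<in> D" "(SUP d\<in>D. g d) < g d" using D by blast
    then show False using SUP_upper[of d D g] by auto
  qed
qed

lemma completion_ex_borel_measurable_complex:
  fixes g :: "'a \<Rightarrow> complex"
  assumes "g \<in> borel_measurable (completion M)"
  shows "\<exists>g'\<in>borel_measurable M. AE x in M. g x = g' x"
proof -
  have Re: "(\<lambda>x. Re (g x)) \<in> borel_measurable (completion M)"
    and Im: "(\<lambda>x. Im (g x)) \<in> borel_measurable (completion M)"
    using assms by measurable
  from completion_ex_borel_measurable_real[OF Re] obtain g1
    where g1: "g1 \<in> borel_measurable M" "AE x in M. Re (g x) = g1 x" by blast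
  from completion_ex_borel_measurable_real[OF Im] obtain g2
    where g2: "g2 \<in> borel_measurable M" "AE x in M. Im (g x) = g2 x" by blast
  show ?thesis
  proof (rule bexI)
    show "(\<lambda>x. Complex (g1 x) (g2 x)) \<in> borel_measurable M"
      using g1(1) g2(1) by (subst borel_measurable_complex_iff) simp
    show "AE x in M. g x = Complex (g1 x) (g2 x)"
      using g1(2) g2(2) by eventually_elim (simp add: complex_eq_iff)
  qed
qed

lemma sets_completion_inner_approx:
  assumes "A \<in> sets (completion M)"
  obtains S N where "S \<in> sets M" "N \<in> null_sets M" "S \<subseteq> A" "A - S \<subseteq> N"
proof -
  from assms obtain S N0 N where "A = S \<union> N0" "N0 \<subseteq> N" "N \<in> null_sets M" "S \<in> sets M"
    by (rule sets_completionE)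
  then show ?thesis by (intro that[of S N]) auto
qed

lemma borel_measurable_lborel_pair_continuous:
  fixes g :: "'a::euclidean_space \<times> 'b::euclidean_space \<Rightarrow> 'c::topological_space"
  assumes "continuous_on UNIV g"
  shows "g \<in> borel_measurable (lborel \<Otimes>\<^sub>M lborel)"
  using borel_measurable_continuous_onI[OF assms] by (simp add: lborel_prod)

lemma nn_integral_lborel_translate:
  fixes f :: "'a::euclidean_space \<Rightarrow> ennreal"
  assumes "f \<in> borel_measurable borel"
  shows "(\<integral>\<^sup>+x. f (x + c) \<partial>lborel) = integral\<^sup>N lborel f"
proof -
  have "integral\<^sup>N lborel f = integral\<^sup>N (distr lborel borel ((+) c)) f"
    by (simp add: lborel_distr_plus)
  also have "\<dots> = (\<integral>\<^sup>+x. f (c + x) \<partial>lborel)"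
    using assms by (subst nn_integral_distr) auto
  finally show ?thesis by (simp add: add.commute)
qed

lemma AE_less_top_of_nn_integral_square:
  fixes c :: "'a \<Rightarrow> ennreal"
  assumes "c \<in> borel_measurable M" "(\<integral>\<^sup>+x. (c x)^2 \<partial>M) < \<infinity>"
  shows "AE x in M. c x < \<infinity>"
proof -
  have "AE x in M. (c x)^2 \<noteq> \<infinity>"
    using assms by (intro nn_integral_PInf_AE) auto
  then show ?thesis
    by eventually_elim (simp add: top.not_eq_extremum[symmetric] power2_eq_square ennreal_mult_eq_top_iff)
qed

section \<open>Flux and phase\<close>

lemma magnetic_field_continuous:
  assumes "magnetic_field B"
  shows "\<forall>j k. continuous_on UNIV (B j k)"
proof (intro allI)
  fix j k
  have "BC_inf (B j k)" using assms by (simp add: magnetic_field_def)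
  then have "\<forall>x. B j k differentiable (at x)"
    unfolding BC_inf_def by (metis pd.simps(1))
  then show "continuous_on UNIV (B j k)"
    by (intro continuous_at_imp_continuous_on) (auto intro: differentiable_imp_continuous_within)
qed

definition flux_density ::
    "('n::finite \<Rightarrow> 'n \<Rightarrow> real^'n \<Rightarrow> real) \<Rightarrow> real^'n \<Rightarrow> real^'n \<Rightarrow> real^'n \<Rightarrow> real \<Rightarrow> real \<Rightarrow> real" where
  "flux_density B x y z s t = (\<Sum>j\<in>UNIV. \<Sum>k\<in>UNIV. B j k (x + s *\<^sub>R y + t *\<^sub>R z) * (y $ j) * (z $ k))"

lemma gammaB_eq_flux_density:
  "gammaB B x y z = integral {0..1} (\<lambda>s. integral {0..s} (flux_density B x y z s))"
  unfolding gammaB_def flux_density_def ..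

lemma continuous_on_flux_density:
  assumes "\<forall>j k. continuous_on UNIV (B j k)"
  shows "continuous_on UNIV (\<lambda>((x, y, z), s, t). flux_density B x y z s t)"
  unfolding flux_density_def case_prod_beta
  by (intro continuous_intros continuous_on_compose2[OF assms[rule_format]]) auto

lemma continuous_on_flux_inner_integral:
  assumes "\<forall>j k. continuous_on UNIV (B j k)"
  shows "continuous_on (UNIV \<times> {0..1}) (\<lambda>((x, y, z), s). integral {0..s} (flux_density B x y z s))"
  using continuous_on_integral_0_upto[where K = "\<lambda>(x, y, z) s t. flux_density B x y z s t"]
    continuous_on_flux_density[OF assms]
  by (simp add: case_prod_beta)

lemma continuous_on_gammaB:
  assumes "\<forall>j k. continuous_on UNIV (B j k)"
  shows "continuous_on UNIV (\<lambda>(x, y, z). gammaB B x y z)"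
  using integral_continuous_on_param[OF continuous_on_flux_inner_integral[OF assms, simplified cbox_interval[symmetric]]]
  by (simp add: gammaB_eq_flux_density case_prod_beta)

lemma continuous_on_flux_slices:
  assumes "\<forall>j k. continuous_on UNIV (B j k)"
  shows "continuous_on UNIV (flux_density B x y z s)"
    and "continuous_on {0..1} (\<lambda>s. integral {0..s} (flux_density B x y z s))"
proof -
  have "continuous_on UNIV (\<lambda>t. (\<lambda>((x, y, z), s, t). flux_density B x y z s t) ((x, y, z), s, t))"
    by (rule continuous_on_compose2[OF continuous_on_flux_density[OF assms]]) (auto intro!: continuous_intros)
  then show "continuous_on UNIV (flux_density B x y z s)" by simp
  have "continuous_on {0..1} (\<lambda>s. (\<lambda>((x, y, z), s). integral {0..s} (flux_density B x y z s)) ((x, y, z), s))"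
    by (rule continuous_on_compose2[OF continuous_on_flux_inner_integral[OF assms]]) (auto intro!: continuous_intros)
  then show "continuous_on {0..1} (\<lambda>s. integral {0..s} (flux_density B x y z s))" by simp
qed

lemma flux_density_diff_le:
  assumes "\<forall>j k w. \<bar>B1 j k w - B2 j k w\<bar> \<le> e"
  shows "\<bar>flux_density B1 x y z s t - flux_density B2 x y z s t\<bar> \<le> e * (\<Sum>j\<in>UNIV. \<Sum>k\<in>UNIV. \<bar>y $ j\<bar> * \<bar>z $ k\<bar>)"
proof -
  let ?w = "x + s *\<^sub>R y + t *\<^sub>R z"
  have "\<bar>flux_density B1 x y z s t - flux_density B2 x y z s t\<bar>
      = \<bar>\<Sum>j\<in>UNIV. \<Sum>k\<in>UNIV. (B1 j k ?w - B2 j k ?w) * (y $ j) * (z $ k)\<bar>"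
    unfolding flux_density_def by (simp add: sum_subtractf[symmetric] left_diff_distrib)
  also have "\<dots> \<le> (\<Sum>j\<in>UNIV. \<Sum>k\<in>UNIV. \<bar>(B1 j k ?w - B2 j k ?w) * (y $ j) * (z $ k)\<bar>)"
    by (rule order.trans[OF sum_abs]) (intro sum_mono sum_abs)
  also have "\<dots> \<le> (\<Sum>j\<in>UNIV. \<Sum>k\<in>UNIV. e * (\<bar>y $ j\<bar> * \<bar>z $ k\<bar>))"
    by (intro sum_mono) (auto simp: abs_mult mult.assoc intro!: mult_right_mono assms[rule_format])
  finally show ?thesis by (simp add: sum_distrib_left)
qed

lemma gammaB_diff_le:
  assumes B1: "\<forall>j k. continuous_on UNIV (B1 j k)" and B2: "\<forall>j k. continuous_on UNIV (B2 j k)"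
    and e: "\<forall>j k w. \<bar>B1 j k w - B2 j k w\<bar> \<le> e"
  shows "\<bar>gammaB B1 x y z - gammaB B2 x y z\<bar> \<le> e * (\<Sum>j\<in>UNIV. \<Sum>k\<in>UNIV. \<bar>y $ j\<bar> * \<bar>z $ k\<bar>)"
    (is "_ \<le> ?C")
proof -
  have "0 \<le> e" by (rule order_trans[OF abs_ge_zero e[rule_format]])
  then have C: "0 \<le> ?C" by (intro mult_nonneg_nonneg sum_nonneg) auto
  note K1 = continuous_on_flux_slices[OF B1] and K2 = continuous_on_flux_slices[OF B2]
  have K: "\<bar>flux_density B1 x y z s t - flux_density B2 x y z s t\<bar> \<le> ?C" for s t
    by (rule flux_density_diff_le[OF e])
  have inner: "\<bar>integral {0..s} (flux_density B1 x y z s) - integral {0..s} (flux_density B2 x y z s)\<bar> \<le> ?C"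
    if s: "s \<in> {0..1}" for s
  proof -
    have i1: "flux_density B1 x y z s integrable_on {0..s}" and i2: "flux_density B2 x y z s integrable_on {0..s}"
      using K1(1)[of x y z s] K2(1)[of x y z s]
      by (auto intro!: integrable_continuous_interval intro: continuous_on_subset[of UNIV])
    have "\<bar>integral {0..s} (flux_density B1 x y z s) - integral {0..s} (flux_density B2 x y z s)\<bar>
        = norm (integral {0..s} (\<lambda>t. flux_density B1 x y z s t - flux_density B2 x y z s t))"
      using integral_diff[OF i1 i2] by simp
    also have "\<dots> \<le> integral {0..s} (\<lambda>t. ?C)"
        by (rule integral_norm_bound_integral) (use i1 i2 K integrable_diff[OF i1 i2] in auto)
    also have "\<dots> = s * ?C" using s by simp
    also have "\<dots> \<le> ?C" using s C by (intro mult_left_le_one_le) auto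
    finally show ?thesis .
  qed
  have o1: "(\<lambda>s. integral {0..s} (flux_density B1 x y z s)) integrable_on {0..1}"
    and o2: "(\<lambda>s. integral {0..s} (flux_density B2 x y z s)) integrable_on {0..1}"
    using K1(2)[of x y z] K2(2)[of x y z] by (auto intro!: integrable_continuous_interval)
  have "\<bar>gammaB B1 x y z - gammaB B2 x y z\<bar>
      = norm (integral {0..1} (\<lambda>s. integral {0..s} (flux_density B1 x y z s) - integral {0..s} (flux_density B2 x y z s)))"
    unfolding gammaB_eq_flux_density using integral_diff[OF o1 o2] by simp
  also have "\<dots> \<le> integral {0..1} (\<lambda>s::real. ?C)"
    by (intro integral_norm_bound_integral integrable_diff o1 o2) (use inner in auto)
  finally show ?thesis by simp
qed

lemma gammaB_tendsto:
  assumes B: "\<forall>\<^sub>F \<epsilon> in F. \<forall>j k. continuous_on UNIV (B \<epsilon> j k)"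
    and B0: "\<forall>j k. continuous_on UNIV (B0 j k)"
    and unif: "\<forall>j k. uniform_limit UNIV (\<lambda>\<epsilon>. B \<epsilon> j k) (B0 j k) F"
  shows "((\<lambda>\<epsilon>. gammaB (B \<epsilon>) x y z) \<longlongrightarrow> gammaB B0 x y z) F"
proof (rule tendstoI)
  fix e :: real assume "e > 0"
  define C where "C = (\<Sum>j\<in>UNIV. \<Sum>k\<in>UNIV. \<bar>y $ j\<bar> * \<bar>z $ k\<bar>)"
  have "C \<ge> 0" unfolding C_def by (auto intro!: sum_nonneg)
  define e' where "e' = e / (C + 1)"
  have "e' > 0" using \<open>e > 0\<close> \<open>C \<ge> 0\<close> by (simp add: e'_def)
  have "e' * C = e * (C / (C + 1))" by (simp add: e'_def)
  also have "\<dots> < e * 1" using \<open>e > 0\<close> \<open>C \<ge> 0\<close> by (intro mult_strict_left_mono) auto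
  finally have "e' * C < e" by simp
  have "\<forall>\<^sub>F \<epsilon> in F. \<forall>x. dist (B \<epsilon> j k x) (B0 j k x) < e'" for j k
    using unif \<open>e' > 0\<close> by (simp add: uniform_limit_iff)
  then have "\<forall>\<^sub>F \<epsilon> in F. \<forall>j k x. dist (B \<epsilon> j k x) (B0 j k x) < e'"
    by (intro eventually_all_finite)
  with B show "\<forall>\<^sub>F \<epsilon> in F. dist (gammaB (B \<epsilon>) x y z) (gammaB B0 x y z) < e"
  proof eventually_elim
    case (elim \<epsilon>)
    then have "\<bar>gammaB (B \<epsilon>) x y z - gammaB B0 x y z\<bar> \<le> e' * C"
      unfolding C_def by (intro gammaB_diff_le B0) (auto simp: dist_real_def intro: less_imp_le)
    with \<open>e' * C < e\<close> show ?case by (simp add: dist_real_def)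
  qed
qed

definition diamond_phase :: "('n::finite \<Rightarrow> 'n \<Rightarrow> real^'n \<Rightarrow> real) \<Rightarrow> (real^'n) \<times> (real^'n) \<Rightarrow> real^'n \<Rightarrow> complex" where
  "diamond_phase B p z = omegaB B (fst p - (1/2) *\<^sub>R snd p) z (snd p - z)"

lemma norm_diamond_phase [simp]: "cmod (diamond_phase B p z) = 1"
  by (simp add: diamond_phase_def omegaB_def)

lemma continuous_on_diamond_phase:
  assumes "\<forall>j k. continuous_on UNIV (B j k)"
  shows "continuous_on UNIV (\<lambda>(p, z). diamond_phase B p z)"
proof -
  have "continuous_on UNIV (\<lambda>x. (\<lambda>(x, y, z). gammaB B x y z) ((\<lambda>(p, z). (fst p - (1/2) *\<^sub>R snd p, z, snd p - z)) x))"
    by (rule continuous_on_compose2[OF continuous_on_gammaB[OF assms]])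
      (auto intro!: continuous_intros simp: case_prod_beta)
  then have "continuous_on UNIV (\<lambda>x. cis (- (\<lambda>(x, y, z). gammaB B x y z) ((\<lambda>(p, z). (fst p - (1/2) *\<^sub>R snd p, z, snd p - z)) x)))"
    by (intro continuous_on_cis continuous_on_minus)
  then show ?thesis
    by (simp add: diamond_phase_def omegaB_def case_prod_beta)
qed

lemma borel_measurable_diamond_phase:
  assumes "\<forall>j k. continuous_on UNIV (B j k)"
  shows "(\<lambda>x. diamond_phase B (fst x) (snd x)) \<in> borel_measurable (lborel \<Otimes>\<^sub>M lborel)"
  using continuous_on_diamond_phase[OF assms]
  by (intro borel_measurable_lborel_pair_continuous) (simp add: case_prod_beta)

lemma diamond_phase_tendsto:
  assumes "\<forall>\<^sub>F \<epsilon> in F. \<forall>j k. continuous_on UNIV (B \<epsilon> j k)"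
    and "\<forall>j k. continuous_on UNIV (B0 j k)"
    and "\<forall>j k. uniform_limit UNIV (\<lambda>\<epsilon>. B \<epsilon> j k) (B0 j k) F"
  shows "((\<lambda>\<epsilon>. diamond_phase (B \<epsilon>) p z) \<longlongrightarrow> diamond_phase B0 p z) F"
  unfolding diamond_phase_def omegaB_def
  by (intro tendsto_cis tendsto_minus gammaB_tendsto[OF assms])

definition diamond_shift :: "'a::real_vector \<Rightarrow> 'a \<times> 'a \<Rightarrow> 'a \<times> 'a" where
  "diamond_shift z p = (fst p + (1/2) *\<^sub>R z, snd p - z)"

lemma diamond_shift_eq_plus: "diamond_shift z p = p + ((1/2) *\<^sub>R z, - z)"
  unfolding diamond_shift_def by (simp add: prod_eq_iff)

lemma measurable_diamond_shift [measurable]: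
  "(\<lambda>x. diamond_shift (snd x) (fst x)) \<in> borel_measurable (lborel \<Otimes>\<^sub>M (lborel :: 'a::euclidean_space measure))"
  "(\<lambda>z. diamond_shift z p) \<in> borel_measurable (lborel :: 'a measure)"
  "diamond_shift z \<in> borel_measurable (borel :: ('a \<times> 'a) measure)"
  unfolding diamond_shift_def
  by (auto intro!: borel_measurable_lborel_pair_continuous borel_measurable_continuous_onI continuous_intros
      simp: measurable_lborel2)

text \<open>Cauchy--Schwarz with respect to the measure \<open>h z dz\<close>, then Fubini and translation invariance of \<open>lborel\<close>.\<close>

lemma nn_integral_diamond_shift_square_le:
  fixes h :: "'a::euclidean_space \<Rightarrow> ennreal" and u :: "'a \<times> 'a \<Rightarrow> ennreal"
  assumes [measurable]: "h \<in> borel_measurable borel" "u \<in> borel_measurable borel"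
  shows "(\<integral>\<^sup>+p. (\<integral>\<^sup>+z. h z * u (diamond_shift z p) \<partial>lborel)^2 \<partial>lborel)
      \<le> (integral\<^sup>N lborel h)^2 * (\<integral>\<^sup>+p. (u p)^2 \<partial>lborel)"
proof -
  have F: "(\<lambda>(p, z). h z * u (diamond_shift z p) ^ 2) \<in> borel_measurable (lborel \<Otimes>\<^sub>M lborel)"
    by (simp add: case_prod_beta) measurable
  have Cauchy_Schwarz: "(\<integral>\<^sup>+z. h z * u (diamond_shift z p) \<partial>lborel)^2
      \<le> integral\<^sup>N lborel h * (\<integral>\<^sup>+z. h z * u (diamond_shift z p)^2 \<partial>lborel)" for p
  proof -
    let ?M = "density lborel h"
    have "(\<integral>\<^sup>+z. 1 * u (diamond_shift z p) \<partial>?M)^2 \<le> (\<integral>\<^sup>+z. 1^2 \<partial>?M) * (\<integral>\<^sup>+z. u (diamond_shift z p)^2 \<partial>?M)"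
      by (rule Cauchy_Schwarz_nn_integral) auto
    then show ?thesis
      by (simp add: nn_integral_density emeasure_density)
  qed
  have "(\<integral>\<^sup>+p. (\<integral>\<^sup>+z. h z * u (diamond_shift z p) \<partial>lborel)^2 \<partial>lborel)
      \<le> (\<integral>\<^sup>+p. integral\<^sup>N lborel h * (\<integral>\<^sup>+z. h z * u (diamond_shift z p)^2 \<partial>lborel) \<partial>lborel)"
    by (intro nn_integral_mono Cauchy_Schwarz)
  also have "\<dots> = integral\<^sup>N lborel h * (\<integral>\<^sup>+z. (\<integral>\<^sup>+p. h z * u (diamond_shift z p)^2 \<partial>lborel) \<partial>lborel)"
    using lborel_pair.Fubini'[OF F] F by (simp add: nn_integral_cmult)
  also have "(\<integral>\<^sup>+z. (\<integral>\<^sup>+p. h z * u (diamond_shift z p)^2 \<partial>lborel) \<partial>lborel)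
      = (\<integral>\<^sup>+z. h z * (\<integral>\<^sup>+p. (u p)^2 \<partial>lborel) \<partial>lborel)"
  proof (rule nn_integral_cong)
    fix z :: 'a
    have "(\<integral>\<^sup>+p. u (diamond_shift z p)^2 \<partial>lborel) = (\<integral>\<^sup>+p. (u p)^2 \<partial>lborel)"
      unfolding diamond_shift_eq_plus by (rule nn_integral_lborel_translate) measurable
    then show "(\<integral>\<^sup>+p. h z * u (diamond_shift z p)^2 \<partial>lborel) = h z * (\<integral>\<^sup>+p. (u p)^2 \<partial>lborel)"
      by (subst nn_integral_cmult) measurable
  qed
  also have "\<dots> = integral\<^sup>N lborel h * (\<integral>\<^sup>+p. (u p)^2 \<partial>lborel)"
    by (rule nn_integral_multc) simp
  finally show ?thesis by (simp add: power2_eq_square mult.assoc)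
qed

lemma AE_AE_diamond_shift_notin:
  fixes N :: "('a::euclidean_space \<times> 'a) set"
  assumes N: "N \<in> null_sets lborel"
  shows "AE p in lborel. AE z in lborel. diamond_shift z p \<notin> N"
proof -
  have [measurable]: "N \<in> sets borel" using N by auto
  have F: "(\<lambda>(p, z). indicator N (diamond_shift z p) :: ennreal) \<in> borel_measurable (lborel \<Otimes>\<^sub>M lborel)"
    by (simp add: case_prod_beta) measurable
  have "(\<integral>\<^sup>+p. (\<integral>\<^sup>+z. indicator N (diamond_shift z p) \<partial>lborel) \<partial>lborel)
      = (\<integral>\<^sup>+z. (\<integral>\<^sup>+p. indicator N (diamond_shift z p) \<partial>lborel) \<partial>lborel)"
    using lborel_pair.Fubini'[OF F] by simp
  also have "\<dots> = (\<integral>\<^sup>+(z::'a). 0 \<partial>lborel)"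
  proof (rule nn_integral_cong)
    fix z :: 'a
    have "(\<integral>\<^sup>+p. indicator N (diamond_shift z p) \<partial>lborel) = (\<integral>\<^sup>+p. indicator N p \<partial>lborel)"
      unfolding diamond_shift_eq_plus by (rule nn_integral_lborel_translate) simp
    then show "(\<integral>\<^sup>+p. indicator N (diamond_shift z p) \<partial>lborel) = (0::ennreal)"
      using N by auto
  qed
  finally have "(\<integral>\<^sup>+p. (\<integral>\<^sup>+z. indicator N (diamond_shift z p) \<partial>lborel) \<partial>lborel) = 0"
    by simp
  then have "AE p in lborel. (\<integral>\<^sup>+z. indicator N (diamond_shift z p) \<partial>lborel) = 0"
    by (subst (asm) nn_integral_0_iff_AE) (use F in measurable)
  then show ?thesis
  proof eventually_elim
    case (elim p)
    then have "AE z in lborel. (indicator N (diamond_shift z p) :: ennreal) = 0"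
      by (subst (asm) nn_integral_0_iff_AE) simp_all
    then show ?case by eventually_elim (simp add: indicator_def split: if_splits)
  qed
qed

lemma borel_measurable_nn_integral_diamond_shift:
  fixes h :: "'a::euclidean_space \<Rightarrow> ennreal" and u :: "'a \<times> 'a \<Rightarrow> ennreal"
  assumes [measurable]: "h \<in> borel_measurable borel" "u \<in> borel_measurable borel"
  shows "(\<lambda>p. \<integral>\<^sup>+z. h z * u (diamond_shift z p) \<partial>lborel) \<in> borel_measurable borel"
proof -
  have "(\<lambda>(p, z). h z * u (diamond_shift z p)) \<in> borel_measurable (lborel \<Otimes>\<^sub>M lborel)"
    by (simp add: case_prod_beta) measurable
  from lborel.borel_measurable_nn_integral[OF this] show ?thesis by simp
qed

section \<open>Borel versions of the data\<close>

text \<open>The product measure \<open>lborel \<Otimes>\<^sub>M lborel\<close> is not complete, so for Fubini the Lebesgue-measurable \<open>\<phi>\<close> and \<open>\<psi>\<close> are replaced by Borel versions that vanish over a null set of fibres \<open>y\<close>, resp. on a null set of points \<open>(x, y)\<close>.\<close>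

definition Lfrak_rep :: "('a \<Rightarrow> 'b \<Rightarrow> complex) \<Rightarrow> 'b set \<Rightarrow> 'a \<times> 'b \<Rightarrow> complex" where
  "Lfrak_rep \<phi> N p = (if snd p \<in> N then 0 else \<phi> (fst p) (snd p))"

lemma Lfrak_rep_eq [simp]: "y \<notin> N \<Longrightarrow> Lfrak_rep \<phi> N (x, y) = \<phi> x y"
  by (simp add: Lfrak_rep_def)

definition L2_rep :: "('a \<Rightarrow> 'b \<Rightarrow> complex) \<Rightarrow> ('a \<times> 'b) set \<Rightarrow> 'a \<times> 'b \<Rightarrow> complex" where
  "L2_rep \<psi> N p = (if p \<in> N then 0 else \<psi> (fst p) (snd p))"

lemma in_L2_Borel_version:
  assumes "in_L2 \<psi>"
  obtains N where "N \<in> null_sets lborel" "L2_rep \<psi> N \<in> borel_measurable borel"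
proof -
  have "(\<lambda>p. \<psi> (fst p) (snd p)) \<in> borel_measurable (completion lborel)"
    using assms by (simp add: in_L2_def)
  then obtain g where g: "g \<in> borel_measurable lborel" "AE p in lborel. \<psi> (fst p) (snd p) = g p"
    by (blast dest: completion_ex_borel_measurable_complex)
  then obtain N where N: "{p \<in> space lborel. \<psi> (fst p) (snd p) \<noteq> g p} \<subseteq> N" "emeasure lborel N = 0" "N \<in> sets lborel"
    by (auto elim: AE_E)
  have [measurable]: "N \<in> sets borel" "g \<in> borel_measurable borel" using N(3) g(1) by auto
  have "\<psi> (fst p) (snd p) = g p" if "p \<notin> N" for p
    using N(1) that by auto
  then have "L2_rep \<psi> N = (\<lambda>p. if p \<in> N then 0 else g p)"
    unfolding L2_rep_def by (intro ext) simp
  then have "L2_rep \<psi> N \<in> borel_measurable borel" by simp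
  with N(2,3) show ?thesis by (intro that) auto
qed

lemma nn_integral_L2_rep_square:
  assumes "N \<in> null_sets lborel"
  shows "(\<integral>\<^sup>+p. (ennreal (cmod (L2_rep \<psi> N p)))^2 \<partial>lborel) = L2_norm_sq \<psi>"
proof -
  have "L2_norm_sq \<psi> = (\<integral>\<^sup>+p. ennreal ((cmod (\<psi> (fst p) (snd p)))\<^sup>2) \<partial>lborel)"
    unfolding L2_norm_sq_def by (simp add: nn_integral_completion)
  also have "\<dots> = (\<integral>\<^sup>+p. (ennreal (cmod (L2_rep \<psi> N p)))^2 \<partial>lborel)"
    using AE_not_in[OF assms] by (intro nn_integral_cong_AE) (auto simp: L2_rep_def ennreal_power)
  finally show ?thesis ..
qed

lemma simple_Lfrak_Borel_version:
  fixes s :: "real^'n::finite \<Rightarrow> real^'n \<Rightarrow> complex"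
  assumes "simple_Lfrak s"
  shows "\<exists>N t. N \<in> null_sets lborel \<and> t \<in> borel_measurable borel \<and> (\<forall>x y. y \<notin> N \<longrightarrow> t (x, y) = s x y)"
proof -
  obtain m A g where Ag: "\<forall>i<(m::nat). A i \<in> sets lebesgue \<and> emeasure lebesgue (A i) < \<infinity> \<and> BCu (g i)"
    and s: "\<forall>x y. s x y = (\<Sum>i<m. indicator (A i) y * g i x)"
    using assms unfolding simple_Lfrak_def by blast
  then have A: "\<And>i. i < m \<Longrightarrow> A i \<in> sets lebesgue" and g: "\<And>i. i < m \<Longrightarrow> BCu (g i)"
    by auto
  have "\<forall>i\<in>{..<m}. \<exists>S N. S \<in> sets borel \<and> N \<in> null_sets lborel \<and> S \<subseteq> A i \<and> A i - S \<subseteq> N"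
  proof
    fix i assume "i \<in> {..<m}"
    then have "A i \<in> sets (completion lborel)" using A by simp
    then obtain S N where "S \<in> sets lborel" "N \<in> null_sets lborel" "S \<subseteq> A i" "A i - S \<subseteq> N"
      by (rule sets_completion_inner_approx)
    then show "\<exists>S N. S \<in> sets borel \<and> N \<in> null_sets lborel \<and> S \<subseteq> A i \<and> A i - S \<subseteq> N"
      by auto
  qed
  then obtain S where "\<forall>i\<in>{..<m}. \<exists>N. S i \<in> sets borel \<and> N \<in> null_sets lborel \<and> S i \<subseteq> A i \<and> A i - S i \<subseteq> N"
    by (rule bchoice[THEN exE])
  then obtain N where SN': "\<forall>i\<in>{..<m}. S i \<in> sets borel \<and> N i \<in> null_sets lborel \<and> S i \<subseteq> A i \<and> A i - S i \<subseteq> N i"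
    by (rule bchoice[THEN exE])
  then have SN: "\<And>i. i < m \<Longrightarrow> S i \<in> sets borel \<and> N i \<in> null_sets lborel \<and> S i \<subseteq> A i \<and> A i - S i \<subseteq> N i"
    by blast
  define t where "t p = (\<Sum>i<m. indicator (S i) (snd p) * g i (fst p))" for p :: "(real^'n) \<times> (real^'n)"
  have "t \<in> borel_measurable borel"
    unfolding t_def
  proof (rule borel_measurable_sum)
    fix i assume "i \<in> {..<m}"
    then have [measurable]: "S i \<in> sets borel" "g i \<in> borel_measurable borel"
      using SN g by (auto simp: BCu_def intro!: borel_measurable_continuous_onI uniformly_continuous_imp_continuous)
    show "(\<lambda>p::(real^'n) \<times> (real^'n). indicator (S i) (snd p) * g i (fst p)) \<in> borel_measurable borel"
      unfolding borel_prod[symmetric] by measurable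
  qed
  moreover have "(\<Union>i<m. N i) \<in> null_sets lborel"
    using SN by (intro null_sets_UN') auto
  moreover have "t (x, y) = s x y" if "y \<notin> (\<Union>i<m. N i)" for x y
  proof -
    have "indicator (S i) y = (indicator (A i) y :: complex)" if "i < m" for i
      using SN[OF that] \<open>y \<notin> (\<Union>i<m. N i)\<close> \<open>i < m\<close> by (auto simp: indicator_def)
    then show ?thesis using s by (simp add: t_def)
  qed
  ultimately show ?thesis by blast
qed

lemma in_Lfrak_Borel_version:
  fixes \<phi> :: "real^'n::finite \<Rightarrow> real^'n \<Rightarrow> complex"
  assumes "in_Lfrak \<phi>"
  obtains N where "N \<in> null_sets lborel" "Lfrak_rep \<phi> N \<in> borel_measurable borel"
proof -
  obtain s where s: "\<And>k. simple_Lfrak (s k)"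
    and lim: "AE y in lborel. ((\<lambda>k. SUP x. ennreal (cmod (\<phi> x y - s k x y))) \<longlongrightarrow> 0) sequentially"
    using assms unfolding in_Lfrak_def AE_completion_iff by blast
  have "\<forall>k. \<exists>N t. N \<in> null_sets lborel \<and> t \<in> borel_measurable borel \<and> (\<forall>x y. y \<notin> N \<longrightarrow> t (x, y) = s k x y)"
    using simple_Lfrak_Borel_version[OF s] by blast
  then obtain N where "\<forall>k. \<exists>t. N k \<in> null_sets lborel \<and> t \<in> borel_measurable borel \<and> (\<forall>x y. y \<notin> N k \<longrightarrow> t (x, y) = s k x y)"
    by (rule choice[THEN exE])
  then obtain t where "\<forall>k. N k \<in> null_sets lborel \<and> t k \<in> borel_measurable borel \<and> (\<forall>x y. y \<notin> N k \<longrightarrow> t k (x, y) = s k x y)"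
    by (rule choice[THEN exE])
  then have N: "\<And>k. N k \<in> null_sets lborel" and t: "\<And>k. t k \<in> borel_measurable borel"
    and t_eq: "\<And>k x y. y \<notin> N k \<Longrightarrow> t k (x, y) = s k x y"
    by auto
  from lim obtain N0 where N0: "{y \<in> space lborel. \<not> ((\<lambda>k. SUP x. ennreal (cmod (\<phi> x y - s k x y))) \<longlongrightarrow> 0) sequentially} \<subseteq> N0"
    "emeasure lborel N0 = 0" "N0 \<in> sets lborel"
    by (auto elim: AE_E)
  define M where "M = N0 \<union> (\<Union>k. N k)"
  have "N0 \<in> null_sets lborel" using N0(2,3) by auto
  then have M: "M \<in> null_sets lborel" unfolding M_def by (intro null_sets.Un null_sets_UN N)
  have "Lfrak_rep \<phi> M \<in> borel_measurable borel"
  proof (rule borel_measurable_LIMSEQ_metric)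
    have [measurable]: "M \<in> sets borel" using M by auto
    show "(\<lambda>p. if snd p \<in> M then 0 else t k p) \<in> borel_measurable borel" for k
      using t[of k] unfolding borel_prod[symmetric] by measurable
    show "(\<lambda>k. if snd p \<in> M then 0 else t k p) \<longlonglongrightarrow> Lfrak_rep \<phi> M p" for p
    proof (cases p)
      case (Pair x y)
      show ?thesis
      proof (cases "y \<in> M")
        case False
        then have "(\<lambda>k. s k x y) \<longlonglongrightarrow> \<phi> x y"
          using N0(1) by (intro tendsto_of_SUP_norm_diff_tendsto_0[where f = "\<lambda>x. \<phi> x y"]) (auto simp: M_def)
        then show ?thesis using False t_eq by (simp add: Pair Lfrak_rep_def M_def)
      qed (simp add: Pair Lfrak_rep_def)
    qed
  qed
  with M show ?thesis by (rule that)
qed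

definition fibre_sup :: "('a \<times> 'b \<Rightarrow> complex) \<Rightarrow> 'b \<Rightarrow> ennreal" where
  "fibre_sup f z = (SUP w. ennreal (cmod (f (w, z))))"

lemma borel_measurable_fibre_sup:
  fixes f :: "(real^'n::finite) \<times> (real^'n) \<Rightarrow> complex"
  assumes f: "f \<in> borel_measurable borel" and fibres: "\<And>z. continuous_on UNIV (\<lambda>w. f (w, z))"
  shows "fibre_sup f \<in> borel_measurable borel"
proof -
  obtain D :: "(real^'n) set" where "countable D" and D: "\<And>X. open X \<Longrightarrow> X \<noteq> {} \<Longrightarrow> \<exists>d\<in>D. d \<in> X"
    by (erule countable_dense_setE)
  have eq: "fibre_sup f = (\<lambda>z. SUP d\<in>D. ennreal (cmod (f (d, z))))"
    unfolding fibre_sup_def fun_eq_iff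
    by (intro allI SUP_eq_SUP_dense[OF _ D]) (intro continuous_on_ennreal continuous_on_norm fibres)
  have [measurable]: "(\<lambda>z. ennreal (cmod (f (d, z)))) \<in> borel_measurable borel" for d
  proof -
    have "(\<lambda>z::real^'n. (d, z)) \<in> borel_measurable borel"
      by (intro borel_measurable_continuous_onI continuous_intros)
    from measurable_compose[OF this f] show ?thesis by simp
  qed
  show ?thesis unfolding eq using \<open>countable D\<close> by measurable
qed

lemma nn_integral_fibre_sup_eq_Lfrak_norm:
  fixes \<phi> :: "real^'n::finite \<Rightarrow> real^'n \<Rightarrow> complex"
  assumes "N \<in> null_sets lborel" and "\<And>x y. y \<notin> N \<Longrightarrow> f (x, y) = \<phi> x y"
  shows "integral\<^sup>N lborel (fibre_sup f) = Lfrak_norm \<phi>"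
proof -
  have "Lfrak_norm \<phi> = (\<integral>\<^sup>+ y. (SUP x. ennreal (cmod (\<phi> x y))) \<partial>lborel)"
    unfolding Lfrak_norm_def by (simp add: nn_integral_completion)
  also have "\<dots> = integral\<^sup>N lborel (fibre_sup f)"
    using AE_not_in[OF assms(1)] by (intro nn_integral_cong_AE) (auto simp: fibre_sup_def assms(2))
  finally show ?thesis ..
qed

lemma continuous_on_Lfrak_rep_fibre:
  assumes "in_Lfrak \<phi>"
  shows "continuous_on UNIV (\<lambda>w. Lfrak_rep \<phi> N (w, z))"
  using assms by (cases "z \<in> N") (auto simp: Lfrak_rep_def in_Lfrak_def BCu_def intro: uniformly_continuous_imp_continuous)

lemma borel_measurable_fibre_sup_Lfrak_rep:
  assumes "in_Lfrak \<phi>" "Lfrak_rep \<phi> N \<in> borel_measurable borel"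
  shows "fibre_sup (Lfrak_rep \<phi> N) \<in> borel_measurable borel"
  using assms by (intro borel_measurable_fibre_sup continuous_on_Lfrak_rep_fibre)

lemma fibre_sup_Lfrak_rep_less_top:
  assumes "in_Lfrak \<phi>"
  shows "fibre_sup (Lfrak_rep \<phi> N) z < \<infinity>"
proof -
  have "bounded (range (\<lambda>x. \<phi> x z))" using assms by (simp add: in_Lfrak_def BCu_def)
  then obtain C where C: "\<And>x. cmod (\<phi> x z) \<le> C" by (auto simp: bounded_iff)
  have "fibre_sup (Lfrak_rep \<phi> N) z \<le> ennreal C"
    unfolding fibre_sup_def by (rule SUP_least) (auto simp: Lfrak_rep_def intro!: ennreal_leI order.trans[OF _ C])
  then show ?thesis using order.strict_trans1 by fastforce
qed

section \<open>The magnetic product lies in \<open>L\<^sup>2\<close>\<close>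

definition diamond_integrand ::
    "('n::finite \<Rightarrow> 'n \<Rightarrow> real^'n \<Rightarrow> real) \<Rightarrow> ((real^'n) \<times> (real^'n) \<Rightarrow> complex) \<Rightarrow> ((real^'n) \<times> (real^'n) \<Rightarrow> complex)
      \<Rightarrow> (real^'n) \<times> (real^'n) \<Rightarrow> real^'n \<Rightarrow> complex" where
  "diamond_integrand B f g p z = f (fst p + (1/2) *\<^sub>R (z - snd p), z) * g (diamond_shift z p) * diamond_phase B p z"

lemma borel_measurable_diamond_integrand:
  assumes "\<forall>j k. continuous_on UNIV (B j k)"
    and f[measurable]: "f \<in> borel_measurable borel" and g[measurable]: "g \<in> borel_measurable borel"
  shows "(\<lambda>(p, z). diamond_integrand B f g p z) \<in> borel_measurable (lborel \<Otimes>\<^sub>M lborel)"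
proof -
  have [measurable]: "(\<lambda>x. (fst (fst x) + (1/2) *\<^sub>R (snd x - snd (fst x)), snd x))
      \<in> borel_measurable (lborel \<Otimes>\<^sub>M (lborel :: (real^'n) measure))"
    by (intro borel_measurable_lborel_pair_continuous continuous_intros)
  note borel_measurable_diamond_phase[OF assms(1), measurable]
  show ?thesis unfolding diamond_integrand_def case_prod_beta by measurable
qed

lemma norm_diamond_integrand_le:
  "ennreal (cmod (diamond_integrand B f g p z)) \<le> fibre_sup f z * ennreal (cmod (g (diamond_shift z p)))"
  unfolding diamond_integrand_def fibre_sup_def
  by (auto simp: norm_mult ennreal_mult intro!: mult_right_mono SUP_upper)

definition diamond_majorant :: "(real^'n::finite \<Rightarrow> ennreal) \<Rightarrow> ((real^'n) \<times> (real^'n) \<Rightarrow> complex) \<Rightarrow> (real^'n) \<times> (real^'n) \<Rightarrow> ennreal" where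
  "diamond_majorant h g p = (\<integral>\<^sup>+z. h z * ennreal (cmod (g (diamond_shift z p))) \<partial>lborel)"

lemma borel_measurable_diamond_majorant:
  assumes "h \<in> borel_measurable borel" "g \<in> borel_measurable borel"
  shows "diamond_majorant h g \<in> borel_measurable borel"
proof -
  have "(\<lambda>q. ennreal (cmod (g q))) \<in> borel_measurable borel" using assms(2) by measurable
  from borel_measurable_nn_integral_diamond_shift[OF assms(1) this] show ?thesis
    unfolding diamond_majorant_def .
qed

lemma nn_integral_diamond_majorant_square_le:
  fixes \<phi> :: "real^'n::finite \<Rightarrow> real^'n \<Rightarrow> complex"
  assumes f: "f \<in> borel_measurable borel" "\<And>z. continuous_on UNIV (\<lambda>w. f (w, z))"
    and N: "N \<in> null_sets lborel" "\<And>x y. y \<notin> N \<Longrightarrow> f (x, y) = \<phi> x y"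
    and N\<psi>: "N\<psi> \<in> null_sets lborel" "L2_rep \<psi> N\<psi> \<in> borel_measurable borel"
  shows "(\<integral>\<^sup>+p. (diamond_majorant (fibre_sup f) (L2_rep \<psi> N\<psi>) p)^2 \<partial>lborel)
      \<le> (Lfrak_norm \<phi>)^2 * L2_norm_sq \<psi>"
proof -
  from nn_integral_diamond_shift_square_le[OF borel_measurable_fibre_sup[OF f],
      of "\<lambda>q. ennreal (cmod (L2_rep \<psi> N\<psi> q))"] N\<psi>(2)
  have "(\<integral>\<^sup>+p. (diamond_majorant (fibre_sup f) (L2_rep \<psi> N\<psi>) p)^2 \<partial>lborel)
      \<le> (integral\<^sup>N lborel (fibre_sup f))^2 * (\<integral>\<^sup>+p. (ennreal (cmod (L2_rep \<psi> N\<psi> p)))^2 \<partial>lborel)"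
    unfolding diamond_majorant_def by simp
  also have "\<dots> = (Lfrak_norm \<phi>)^2 * L2_norm_sq \<psi>"
    by (simp add: nn_integral_fibre_sup_eq_Lfrak_norm[where f = f and \<phi> = \<phi>, OF N] nn_integral_L2_rep_square[OF N\<psi>(1)])
  finally show ?thesis .
qed

lemma nn_integral_diamond_majorant_square_less_top:
  fixes \<phi> :: "real^'n::finite \<Rightarrow> real^'n \<Rightarrow> complex"
  assumes \<phi>: "in_Lfrak \<phi>" and \<psi>: "in_L2 \<psi>"
    and N\<phi>: "N\<phi> \<in> null_sets lborel" "Lfrak_rep \<phi> N\<phi> \<in> borel_measurable borel"
    and N\<psi>: "N\<psi> \<in> null_sets lborel" "L2_rep \<psi> N\<psi> \<in> borel_measurable borel"
  shows "(\<integral>\<^sup>+p. (diamond_majorant (fibre_sup (Lfrak_rep \<phi> N\<phi>)) (L2_rep \<psi> N\<psi>) p)^2 \<partial>lborel) < \<infinity>"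
proof -
  have "(\<integral>\<^sup>+p. (diamond_majorant (fibre_sup (Lfrak_rep \<phi> N\<phi>)) (L2_rep \<psi> N\<psi>) p)^2 \<partial>lborel)
      \<le> (Lfrak_norm \<phi>)^2 * L2_norm_sq \<psi>"
    by (rule nn_integral_diamond_majorant_square_le[OF N\<phi>(2) continuous_on_Lfrak_rep_fibre[OF \<phi>] N\<phi>(1) Lfrak_rep_eq N\<psi>])
  also have "\<dots> < \<infinity>"
    using \<phi> \<psi> by (simp add: in_Lfrak_def in_L2_def ennreal_mult_less_top power_less_top_ennreal)
  finally show ?thesis .
qed

lemma diamondB_eq_integral:
  fixes \<phi> :: "real^'n::finite \<Rightarrow> real^'n \<Rightarrow> complex"
  assumes B: "\<forall>j k. continuous_on UNIV (B j k)"
    and N\<phi>: "N\<phi> \<in> null_sets lborel" "Lfrak_rep \<phi> N\<phi> \<in> borel_measurable borel"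
    and gm: "L2_rep \<psi> N\<psi> \<in> borel_measurable borel"
    and fin: "diamond_majorant (fibre_sup (Lfrak_rep \<phi> N\<phi>)) (L2_rep \<psi> N\<psi>) p < \<infinity>"
    and N\<psi>: "AE z in lborel. diamond_shift z p \<notin> N\<psi>"
  shows "integrable lborel (diamond_integrand B (Lfrak_rep \<phi> N\<phi>) (L2_rep \<psi> N\<psi>) p)"
    and "diamondB B \<phi> \<psi> (fst p) (snd p) = (LINT z|lborel. diamond_integrand B (Lfrak_rep \<phi> N\<phi>) (L2_rep \<psi> N\<psi>) p z)"
proof -
  let ?F = "diamond_integrand B (Lfrak_rep \<phi> N\<phi>) (L2_rep \<psi> N\<psi>) p"
  have Fm: "?F \<in> borel_measurable lborel"
    using measurable_Pair2[OF borel_measurable_diamond_integrand[OF B N\<phi>(2) gm], of p] by simp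
  have "(\<integral>\<^sup>+z. ennreal (norm (?F z)) \<partial>lborel) \<le> diamond_majorant (fibre_sup (Lfrak_rep \<phi> N\<phi>)) (L2_rep \<psi> N\<psi>) p"
    unfolding diamond_majorant_def by (intro nn_integral_mono norm_diamond_integrand_le)
  with fin Fm show int: "integrable lborel ?F"
    by (intro integrableI_bounded) auto
  define E where "E z = \<phi> (fst p + (1/2) *\<^sub>R (z - snd p)) z * \<psi> (fst p + (1/2) *\<^sub>R z) (snd p - z)
      * omegaB B (fst p - (1/2) *\<^sub>R snd p) z (snd p - z)" for z
  have "AE z in lborel. E z = ?F z"
    using N\<psi> AE_not_in[OF N\<phi>(1)]
    by eventually_elim (simp add: E_def diamond_integrand_def Lfrak_rep_def L2_rep_def diamond_shift_def diamond_phase_def)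
  then have ae: "AE z in lebesgue. ?F z = E z"
    by (auto dest: AE_completion elim: AE_mp)
  have Fml: "?F \<in> borel_measurable lebesgue" using Fm by (intro measurable_completion) simp
  have "diamondB B \<phi> \<psi> (fst p) (snd p) = (LINT z|lebesgue. E z)"
    unfolding diamondB_def E_def ..
  also have "\<dots> = (LINT z|lebesgue. ?F z)"
    using ae by (intro integral_cong_AE borel_measurable_AE[OF Fml ae] Fml) (auto elim: AE_mp)
  also have "\<dots> = (LINT z|lborel. ?F z)"
    using Fm by (intro integral_completion) simp
  finally show "diamondB B \<phi> \<psi> (fst p) (snd p) = (LINT z|lborel. ?F z)" .
qed

lemma diamondB_AE_eq_integral:
  fixes \<phi> :: "real^'n::finite \<Rightarrow> real^'n \<Rightarrow> complex"
  assumes B: "\<forall>j k. continuous_on UNIV (B j k)" and \<phi>: "in_Lfrak \<phi>" and \<psi>: "in_L2 \<psi>"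
    and N\<phi>: "N\<phi> \<in> null_sets lborel" "Lfrak_rep \<phi> N\<phi> \<in> borel_measurable borel"
    and N\<psi>: "N\<psi> \<in> null_sets lborel" "L2_rep \<psi> N\<psi> \<in> borel_measurable borel"
  shows "AE p in lborel. integrable lborel (diamond_integrand B (Lfrak_rep \<phi> N\<phi>) (L2_rep \<psi> N\<psi>) p) \<and>
      diamondB B \<phi> \<psi> (fst p) (snd p) = (LINT z|lborel. diamond_integrand B (Lfrak_rep \<phi> N\<phi>) (L2_rep \<psi> N\<psi>) p z)"
proof -
  let ?c = "diamond_majorant (fibre_sup (Lfrak_rep \<phi> N\<phi>)) (L2_rep \<psi> N\<psi>)"
  have cm: "?c \<in> borel_measurable lborel"
    using borel_measurable_diamond_majorant[OF borel_measurable_fibre_sup_Lfrak_rep[OF \<phi> N\<phi>(2)] N\<psi>(2)] by simp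
  have "AE p in lborel. ?c p < \<infinity>"
    by (rule AE_less_top_of_nn_integral_square[OF cm nn_integral_diamond_majorant_square_less_top[OF \<phi> \<psi> N\<phi> N\<psi>]])
  with AE_AE_diamond_shift_notin[OF N\<psi>(1)] show ?thesis
  proof eventually_elim
    case (elim p)
    show ?case using diamondB_eq_integral[OF B N\<phi> N\<psi>(2) elim(2,1)] by simp
  qed
qed

lemma in_L2_diamondB:
  fixes \<phi> :: "real^'n::finite \<Rightarrow> real^'n \<Rightarrow> complex"
  assumes B: "\<forall>j k. continuous_on UNIV (B j k)" and \<phi>: "in_Lfrak \<phi>" and \<psi>: "in_L2 \<psi>"
  shows "in_L2 (diamondB B \<phi> \<psi>)"
proof -
  obtain N\<phi> where N\<phi>: "N\<phi> \<in> null_sets lborel" "Lfrak_rep \<phi> N\<phi> \<in> borel_measurable borel"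
    using in_Lfrak_Borel_version[OF \<phi>] .
  obtain N\<psi> where N\<psi>: "N\<psi> \<in> null_sets lborel" "L2_rep \<psi> N\<psi> \<in> borel_measurable borel"
    using in_L2_Borel_version[OF \<psi>] .
  let ?F = "diamond_integrand B (Lfrak_rep \<phi> N\<phi>) (L2_rep \<psi> N\<psi>)"
  let ?c = "diamond_majorant (fibre_sup (Lfrak_rep \<phi> N\<phi>)) (L2_rep \<psi> N\<psi>)"
  let ?D = "\<lambda>p. diamondB B \<phi> \<psi> (fst p) (snd p)"
  note R = diamondB_AE_eq_integral[OF B \<phi> \<psi> N\<phi> N\<psi>]
  have "(\<lambda>p. LINT z|lborel. ?F p z) \<in> borel_measurable lborel"
    by (rule lborel.borel_measurable_lebesgue_integral[OF borel_measurable_diamond_integrand[OF B N\<phi>(2) N\<psi>(2)]])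
  then have "(\<lambda>p. LINT z|lborel. ?F p z) \<in> borel_measurable lebesgue"
    by (intro measurable_completion)
  moreover have "AE p in lebesgue. (LINT z|lborel. ?F p z) = ?D p"
    using AE_completion[OF R] by (auto elim: AE_mp)
  ultimately have meas: "?D \<in> borel_measurable lebesgue"
    by (rule borel_measurable_AE)
  have "AE p in lborel. ennreal ((cmod (?D p))\<^sup>2) \<le> (?c p)^2"
    using R
  proof eventually_elim
    case (elim p)
    then have "ennreal (cmod (?D p)) \<le> (\<integral>\<^sup>+z. ennreal (norm (?F p z)) \<partial>lborel)"
      by (simp add: integral_norm_bound_ennreal)
    also have "\<dots> \<le> ?c p"
      unfolding diamond_majorant_def by (intro nn_integral_mono norm_diamond_integrand_le)
    finally show ?case by (simp add: ennreal_power[symmetric] power_mono)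
  qed
  then have "L2_norm_sq (diamondB B \<phi> \<psi>) \<le> (\<integral>\<^sup>+p. (?c p)^2 \<partial>lborel)"
    unfolding L2_norm_sq_def nn_integral_completion by (rule nn_integral_mono_AE)
  also have "\<dots> < \<infinity>"
    by (rule nn_integral_diamond_majorant_square_less_top[OF \<phi> \<psi> N\<phi> N\<psi>])
  finally show ?thesis using meas unfolding in_L2_def by simp
qed

section \<open>Continuity in the parameter\<close>

definition phase_error ::
    "('n::finite \<Rightarrow> 'n \<Rightarrow> real^'n \<Rightarrow> real) \<Rightarrow> ('n \<Rightarrow> 'n \<Rightarrow> real^'n \<Rightarrow> real) \<Rightarrow> (real^'n \<Rightarrow> ennreal)
      \<Rightarrow> ((real^'n) \<times> (real^'n) \<Rightarrow> complex) \<Rightarrow> (real^'n) \<times> (real^'n) \<Rightarrow> ennreal" where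
  "phase_error B0 B1 h g p = (\<integral>\<^sup>+z. h z * ennreal (cmod (g (diamond_shift z p)))
      * ennreal (cmod (diamond_phase B1 p z - diamond_phase B0 p z)) \<partial>lborel)"

lemma borel_measurable_phase_error_integrand:
  assumes "\<forall>j k. continuous_on UNIV (B0 j k)" "\<forall>j k. continuous_on UNIV (B1 j k)"
    and [measurable]: "h \<in> borel_measurable borel" "g \<in> borel_measurable borel"
  shows "(\<lambda>(p, z). h z * ennreal (cmod (g (diamond_shift z p)))
      * ennreal (cmod (diamond_phase B1 p z - diamond_phase B0 p z))) \<in> borel_measurable (lborel \<Otimes>\<^sub>M lborel)"
proof -
  note borel_measurable_diamond_phase[OF assms(1), measurable]
    and borel_measurable_diamond_phase[OF assms(2), measurable]
  show ?thesis unfolding case_prod_beta by measurable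
qed

lemma borel_measurable_phase_error:
  assumes "\<forall>j k. continuous_on UNIV (B0 j k)" "\<forall>j k. continuous_on UNIV (B1 j k)"
    and "h \<in> borel_measurable borel" "g \<in> borel_measurable borel"
  shows "phase_error B0 B1 h g \<in> borel_measurable borel"
  using lborel.borel_measurable_nn_integral[OF borel_measurable_phase_error_integrand[OF assms]]
  unfolding phase_error_def by simp

lemma ennreal_norm_diamond_phase_diff_le: "ennreal (cmod (diamond_phase B1 p z - diamond_phase B0 p z)) \<le> 2"
  using norm_triangle_ineq4[of "diamond_phase B1 p z" "diamond_phase B0 p z"]
  by (simp add: ennreal_leI[of _ 2, simplified])

lemma phase_error_integrand_le:
  "a * ennreal (cmod (diamond_phase B1 p z - diamond_phase B0 p z)) \<le> 2 * a"
  using mult_left_mono[OF ennreal_norm_diamond_phase_diff_le, of a] by (simp add: ac_simps)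

lemma phase_error_le:
  assumes "h \<in> borel_measurable borel" "g \<in> borel_measurable borel"
  shows "phase_error B0 B1 h g p \<le> 2 * diamond_majorant h g p"
proof -
  have "(\<lambda>z. h z * ennreal (cmod (g (diamond_shift z p)))) \<in> borel_measurable lborel"
    using assms by measurable
  then show ?thesis
    unfolding phase_error_def diamond_majorant_def
    by (subst nn_integral_cmult[symmetric]) (auto intro!: nn_integral_mono phase_error_integrand_le)
qed

lemma norm_diamond_integrand_diff_le:
  "ennreal (cmod (diamond_integrand B1 f1 g p z - diamond_integrand B0 f0 g p z))
    \<le> fibre_sup (\<lambda>q. f1 q - f0 q) z * ennreal (cmod (g (diamond_shift z p)))
      + fibre_sup f0 z * ennreal (cmod (g (diamond_shift z p)))
        * ennreal (cmod (diamond_phase B1 p z - diamond_phase B0 p z))"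
proof -
  let ?w = "(fst p + (1/2) *\<^sub>R (z - snd p), z)" and ?q = "g (diamond_shift z p)"
  have "ennreal (cmod (diamond_integrand B1 f1 g p z - diamond_integrand B0 f0 g p z))
      \<le> ennreal (cmod (f1 ?w - f0 ?w)) * ennreal (cmod ?q)
        + ennreal (cmod (f0 ?w)) * ennreal (cmod ?q) * ennreal (cmod (diamond_phase B1 p z - diamond_phase B0 p z))"
    unfolding diamond_integrand_def
    using norm_mult_diff_le[of "diamond_phase B1 p z" "f1 ?w" ?q "f0 ?w" "diamond_phase B0 p z"]
    by (simp add: ennreal_mult[symmetric] ennreal_plus[symmetric] del: ennreal_plus ennreal_mult)
  also have "\<dots> \<le> fibre_sup (\<lambda>q. f1 q - f0 q) z * ennreal (cmod ?q)
      + fibre_sup f0 z * ennreal (cmod ?q) * ennreal (cmod (diamond_phase B1 p z - diamond_phase B0 p z))"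
    unfolding fibre_sup_def by (intro add_mono mult_right_mono SUP_upper) auto
  finally show ?thesis .
qed

lemma diamondB_diff_le_AE:
  fixes \<phi>1 \<phi>0 :: "real^'n::finite \<Rightarrow> real^'n \<Rightarrow> complex"
  assumes B1: "\<forall>j k. continuous_on UNIV (B1 j k)" and B0: "\<forall>j k. continuous_on UNIV (B0 j k)"
    and \<phi>1: "in_Lfrak \<phi>1" and \<phi>0: "in_Lfrak \<phi>0" and \<psi>: "in_L2 \<psi>"
    and N1: "N1 \<in> null_sets lborel" "Lfrak_rep \<phi>1 N1 \<in> borel_measurable borel"
    and N0: "N0 \<in> null_sets lborel" "Lfrak_rep \<phi>0 N0 \<in> borel_measurable borel"
    and N\<psi>: "N\<psi> \<in> null_sets lborel" "L2_rep \<psi> N\<psi> \<in> borel_measurable borel"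
  shows "AE p in lborel. ennreal (cmod (diamondB B1 \<phi>1 \<psi> (fst p) (snd p) - diamondB B0 \<phi>0 \<psi> (fst p) (snd p)))
      \<le> diamond_majorant (fibre_sup (\<lambda>q. Lfrak_rep \<phi>1 N1 q - Lfrak_rep \<phi>0 N0 q)) (L2_rep \<psi> N\<psi>) p
        + phase_error B0 B1 (fibre_sup (Lfrak_rep \<phi>0 N0)) (L2_rep \<psi> N\<psi>) p"
  using diamondB_AE_eq_integral[OF B1 \<phi>1 \<psi> N1 N\<psi>] diamondB_AE_eq_integral[OF B0 \<phi>0 \<psi> N0 N\<psi>]
proof eventually_elim
  case (elim p)
  let ?F = "diamond_integrand B1 (Lfrak_rep \<phi>1 N1) (L2_rep \<psi> N\<psi>) p"
    and ?G = "diamond_integrand B0 (Lfrak_rep \<phi>0 N0) (L2_rep \<psi> N\<psi>) p"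
    and ?u = "\<lambda>z. ennreal (cmod (L2_rep \<psi> N\<psi> (diamond_shift z p)))"
    and ?h = "fibre_sup (\<lambda>q. Lfrak_rep \<phi>1 N1 q - Lfrak_rep \<phi>0 N0 q)"
    and ?k = "fibre_sup (Lfrak_rep \<phi>0 N0)"
  have "ennreal (cmod (diamondB B1 \<phi>1 \<psi> (fst p) (snd p) - diamondB B0 \<phi>0 \<psi> (fst p) (snd p)))
      = ennreal (norm (LINT z|lborel. ?F z - ?G z))"
    using elim by simp
  also have "\<dots> \<le> (\<integral>\<^sup>+z. ennreal (norm (?F z - ?G z)) \<partial>lborel)"
    using elim by (intro integral_norm_bound_ennreal) auto
  also have "\<dots> \<le> (\<integral>\<^sup>+z. ?h z * ?u z + ?k z * ?u z
      * ennreal (cmod (diamond_phase B1 p z - diamond_phase B0 p z)) \<partial>lborel)"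
    by (intro nn_integral_mono norm_diamond_integrand_diff_le)
  also have "\<dots> = diamond_majorant ?h (L2_rep \<psi> N\<psi>) p + phase_error B0 B1 ?k (L2_rep \<psi> N\<psi>) p"
    unfolding diamond_majorant_def phase_error_def
  proof (rule nn_integral_add)
    have "?h \<in> borel_measurable borel"
      using \<phi>1 \<phi>0 N1(2) N0(2) by (intro borel_measurable_fibre_sup continuous_intros continuous_on_Lfrak_rep_fibre) auto
    then show "(\<lambda>z. ?h z * ?u z) \<in> borel_measurable lborel"
      using N\<psi>(2) by measurable
    show "(\<lambda>z. ?k z * ?u z * ennreal (cmod (diamond_phase B1 p z - diamond_phase B0 p z))) \<in> borel_measurable lborel"
      using measurable_Pair2[OF borel_measurable_phase_error_integrand[OF B0 B1
          borel_measurable_fibre_sup_Lfrak_rep[OF \<phi>0 N0(2)] N\<psi>(2)], of p]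
      by simp
  qed
  finally show ?case .
qed

text \<open>Split \<open>\<phi>\<^sub>1 \<diamond>\<^sup>1 \<psi> - \<phi>\<^sub>0 \<diamond>\<^sup>0 \<psi> = (\<phi>\<^sub>1 - \<phi>\<^sub>0) \<diamond>\<^sup>1 \<psi> + (\<phi>\<^sub>0 \<diamond>\<^sup>1 \<psi> - \<phi>\<^sub>0 \<diamond>\<^sup>0 \<psi>)\<close>: the first part obeys the Schur bound, the second is dominated by \<open>phase_error\<close>.\<close>

lemma L2_norm_sq_diamondB_diff_le:
  fixes \<phi>1 \<phi>0 :: "real^'n::finite \<Rightarrow> real^'n \<Rightarrow> complex"
  assumes B1: "\<forall>j k. continuous_on UNIV (B1 j k)" and B0: "\<forall>j k. continuous_on UNIV (B0 j k)"
    and \<phi>1: "in_Lfrak \<phi>1" and \<phi>0: "in_Lfrak \<phi>0" and \<psi>: "in_L2 \<psi>"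
    and N0: "N0 \<in> null_sets lborel" "Lfrak_rep \<phi>0 N0 \<in> borel_measurable borel"
    and N\<psi>: "N\<psi> \<in> null_sets lborel" "L2_rep \<psi> N\<psi> \<in> borel_measurable borel"
  shows "L2_norm_sq (\<lambda>x y. diamondB B1 \<phi>1 \<psi> x y - diamondB B0 \<phi>0 \<psi> x y)
    \<le> 2 * ((Lfrak_norm (\<lambda>x y. \<phi>1 x y - \<phi>0 x y))^2 * L2_norm_sq \<psi>)
      + 2 * (\<integral>\<^sup>+p. (phase_error B0 B1 (fibre_sup (Lfrak_rep \<phi>0 N0)) (L2_rep \<psi> N\<psi>) p)^2 \<partial>lborel)"
proof -
  obtain N1 where N1: "N1 \<in> null_sets lborel" "Lfrak_rep \<phi>1 N1 \<in> borel_measurable borel"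
    using in_Lfrak_Borel_version[OF \<phi>1] .
  let ?f = "\<lambda>q. Lfrak_rep \<phi>1 N1 q - Lfrak_rep \<phi>0 N0 q"
  let ?a = "diamond_majorant (fibre_sup ?f) (L2_rep \<psi> N\<psi>)"
    and ?b = "phase_error B0 B1 (fibre_sup (Lfrak_rep \<phi>0 N0)) (L2_rep \<psi> N\<psi>)"
  have fm: "?f \<in> borel_measurable borel" using N1(2) N0(2) by measurable
  have fc: "continuous_on UNIV (\<lambda>w. ?f (w, z))" for z
    using \<phi>1 \<phi>0 by (intro continuous_intros continuous_on_Lfrak_rep_fibre)
  have am: "?a \<in> borel_measurable borel"
    by (rule borel_measurable_diamond_majorant[OF borel_measurable_fibre_sup[OF fm fc] N\<psi>(2)])
  have bm: "?b \<in> borel_measurable borel"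
    by (rule borel_measurable_phase_error[OF B0 B1 borel_measurable_fibre_sup_Lfrak_rep[OF \<phi>0 N0(2)] N\<psi>(2)])
  have a2: "(\<integral>\<^sup>+p. (?a p)^2 \<partial>lborel) \<le> (Lfrak_norm (\<lambda>x y. \<phi>1 x y - \<phi>0 x y))^2 * L2_norm_sq \<psi>"
    using N1(1) N0(1)
    by (intro nn_integral_diamond_majorant_square_le[OF fm fc _ _ N\<psi>, where N = "N1 \<union> N0"]) auto
  have "L2_norm_sq (\<lambda>x y. diamondB B1 \<phi>1 \<psi> x y - diamondB B0 \<phi>0 \<psi> x y)
      = (\<integral>\<^sup>+p. (ennreal (cmod (diamondB B1 \<phi>1 \<psi> (fst p) (snd p) - diamondB B0 \<phi>0 \<psi> (fst p) (snd p))))^2 \<partial>lborel)"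
    unfolding L2_norm_sq_def by (simp add: nn_integral_completion ennreal_power)
  also have "\<dots> \<le> (\<integral>\<^sup>+p. 2 * (?a p)^2 + 2 * (?b p)^2 \<partial>lborel)"
    using diamondB_diff_le_AE[OF B1 B0 \<phi>1 \<phi>0 \<psi> N1 N0 N\<psi>]
    by (intro nn_integral_mono_AE) (auto elim!: eventually_mono intro: order_trans[OF power_mono square_add_le_ennreal])
  also have "\<dots> = 2 * (\<integral>\<^sup>+p. (?a p)^2 \<partial>lborel) + 2 * (\<integral>\<^sup>+p. (?b p)^2 \<partial>lborel)"
    using am bm by (simp add: nn_integral_add nn_integral_cmult)
  also have "\<dots> \<le> 2 * ((Lfrak_norm (\<lambda>x y. \<phi>1 x y - \<phi>0 x y))^2 * L2_norm_sq \<psi>) + 2 * (\<integral>\<^sup>+p. (?b p)^2 \<partial>lborel)"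
    by (intro add_mono mult_left_mono a2) auto
  finally show ?thesis .
qed

lemma phase_error_LIMSEQ_0:
  fixes h :: "real^'n::finite \<Rightarrow> ennreal"
  assumes Bs: "\<And>i. \<forall>j k. continuous_on UNIV (Bs i j k)" and B0: "\<forall>j k. continuous_on UNIV (B0 j k)"
    and phase: "\<And>z. (\<lambda>i. diamond_phase (Bs i) p z) \<longlonglongrightarrow> diamond_phase B0 p z"
    and h: "h \<in> borel_measurable borel" "\<And>z. h z < \<infinity>" and g: "g \<in> borel_measurable borel"
    and fin: "diamond_majorant h g p < \<infinity>"
  shows "(\<lambda>i. phase_error B0 (Bs i) h g p) \<longlonglongrightarrow> 0"
proof -
  let ?w = "\<lambda>z. h z * ennreal (cmod (g (diamond_shift z p)))"
  have wm: "?w \<in> borel_measurable lborel" using h(1) g by measurable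
  have "(\<lambda>i. phase_error B0 (Bs i) h g p) \<longlonglongrightarrow> (\<integral>\<^sup>+(z::real^'n). 0 \<partial>lborel)"
    unfolding phase_error_def
  proof (rule nn_integral_dominated_convergence[where w = "\<lambda>z. 2 * ?w z"])
    show "(\<lambda>z. ?w z * ennreal (cmod (diamond_phase (Bs i) p z - diamond_phase B0 p z))) \<in> borel_measurable lborel" for i
      using measurable_Pair2[OF borel_measurable_phase_error_integrand[OF B0 Bs h(1) g], of p] by simp
    show "(\<lambda>z. 2 * ?w z) \<in> borel_measurable lborel" using wm by measurable
    show "AE z in lborel. ?w z * ennreal (cmod (diamond_phase (Bs i) p z - diamond_phase B0 p z)) \<le> 2 * ?w z" for i
      by (intro AE_I2 phase_error_integrand_le)
    have "(\<integral>\<^sup>+z. 2 * ?w z \<partial>lborel) = 2 * diamond_majorant h g p"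
      unfolding diamond_majorant_def using wm by (rule nn_integral_cmult)
    with fin show "(\<integral>\<^sup>+z. 2 * ?w z \<partial>lborel) < \<infinity>" by (simp add: ennreal_mult_less_top)
    show "AE z in lborel. (\<lambda>i. ?w z * ennreal (cmod (diamond_phase (Bs i) p z - diamond_phase B0 p z))) \<longlonglongrightarrow> 0"
    proof (intro AE_I2)
      fix z
      have "(\<lambda>i. ennreal (cmod (diamond_phase (Bs i) p z - diamond_phase B0 p z))) \<longlonglongrightarrow> ennreal (cmod (0::complex))"
        using phase[of z] by (intro tendsto_ennrealI tendsto_norm) (simp add: LIM_zero)
      moreover have "?w z < \<infinity>" using h(2)[of z] by (simp add: ennreal_mult_less_top)
      ultimately show "(\<lambda>i. ?w z * ennreal (cmod (diamond_phase (Bs i) p z - diamond_phase B0 p z))) \<longlonglongrightarrow> 0"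
        using ennreal_tendsto_cmult[of "?w z"] by fastforce
    qed
  qed simp
  then show ?thesis by simp
qed

lemma nn_integral_phase_error_square_LIMSEQ_0:
  fixes h :: "real^'n::finite \<Rightarrow> ennreal"
  assumes Bs: "\<And>i. \<forall>j k. continuous_on UNIV (Bs i j k)" and B0: "\<forall>j k. continuous_on UNIV (B0 j k)"
    and phase: "\<And>p z. (\<lambda>i. diamond_phase (Bs i) p z) \<longlonglongrightarrow> diamond_phase B0 p z"
    and h: "h \<in> borel_measurable borel" "\<And>z. h z < \<infinity>" and g: "g \<in> borel_measurable borel"
    and c2: "(\<integral>\<^sup>+p. (diamond_majorant h g p)^2 \<partial>lborel) < \<infinity>"
  shows "(\<lambda>i. \<integral>\<^sup>+p. (phase_error B0 (Bs i) h g p)^2 \<partial>lborel) \<longlonglongrightarrow> 0"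
proof -
  have cm: "diamond_majorant h g \<in> borel_measurable borel"
    by (rule borel_measurable_diamond_majorant[OF h(1) g])
  then have cfin: "AE p in lborel. diamond_majorant h g p < \<infinity>"
    by (intro AE_less_top_of_nn_integral_square[OF _ c2]) simp
  have "(\<lambda>i. \<integral>\<^sup>+p. (phase_error B0 (Bs i) h g p)^2 \<partial>lborel) \<longlonglongrightarrow> (\<integral>\<^sup>+(p::(real^'n) \<times> (real^'n)). 0 \<partial>lborel)"
  proof (rule nn_integral_dominated_convergence[where w = "\<lambda>p. 4 * (diamond_majorant h g p)^2"])
    show "(\<lambda>p. (phase_error B0 (Bs i) h g p)^2) \<in> borel_measurable lborel" for i
      using borel_measurable_phase_error[OF B0 Bs h(1) g] by measurable
    show "(\<lambda>p. 4 * (diamond_majorant h g p)^2) \<in> borel_measurable lborel"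
      using cm by measurable
    show "AE p in lborel. (phase_error B0 (Bs i) h g p)^2 \<le> 4 * (diamond_majorant h g p)^2" for i
      using power_mono[OF phase_error_le[OF h(1) g], where n = 2] by (intro AE_I2) (simp add: power_mult_distrib)
    have "(\<integral>\<^sup>+p. 4 * (diamond_majorant h g p)^2 \<partial>lborel) = 4 * (\<integral>\<^sup>+p. (diamond_majorant h g p)^2 \<partial>lborel)"
      using cm by (intro nn_integral_cmult) measurable
    with c2 show "(\<integral>\<^sup>+p. 4 * (diamond_majorant h g p)^2 \<partial>lborel) < \<infinity>"
      by (simp add: ennreal_mult_less_top)
    show "AE p in lborel. (\<lambda>i. (phase_error B0 (Bs i) h g p)^2) \<longlonglongrightarrow> 0"
      using cfin
    proof eventually_elim
      case (elim p)
      have "(\<lambda>i. phase_error B0 (Bs i) h g p) \<longlonglongrightarrow> 0"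
        by (rule phase_error_LIMSEQ_0[OF Bs B0 phase h g elim])
      from tendsto_mult_ennreal[OF this this] show ?case
        by (simp add: power2_eq_square)
    qed
  qed simp
  then show ?thesis by simp
qed

lemma nn_integral_phase_error_square_tendsto_0:
  fixes B :: "'e::first_countable_topology \<Rightarrow> 'n::finite \<Rightarrow> 'n \<Rightarrow> real^'n \<Rightarrow> real"
    and h :: "real^'n \<Rightarrow> ennreal"
  assumes B: "\<forall>\<epsilon>\<in>S. \<forall>j k. continuous_on UNIV (B \<epsilon> j k)" and B0: "\<forall>j k. continuous_on UNIV (B \<epsilon>0 j k)"
    and B_lim: "\<forall>j k. uniform_limit UNIV (\<lambda>\<epsilon>. B \<epsilon> j k) (B \<epsilon>0 j k) (at \<epsilon>0 within S)"
    and h: "h \<in> borel_measurable borel" "\<And>z. h z < \<infinity>" and g: "g \<in> borel_measurable borel"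
    and c2: "(\<integral>\<^sup>+p. (diamond_majorant h g p)^2 \<partial>lborel) < \<infinity>"
  shows "((\<lambda>\<epsilon>. \<integral>\<^sup>+p. (phase_error (B \<epsilon>0) (B \<epsilon>) h g p)^2 \<partial>lborel) \<longlongrightarrow> 0) (at \<epsilon>0 within S)"
  unfolding tendsto_at_iff_sequentially comp_def
proof (intro allI impI)
  fix X assume X: "\<forall>i. X i \<in> S - {\<epsilon>0}" and "X \<longlonglongrightarrow> \<epsilon>0"
  then have X_lim: "filterlim X (at \<epsilon>0 within S) sequentially"
    unfolding filterlim_at by auto
  have "\<forall>\<^sub>F \<epsilon> in at \<epsilon>0 within S. \<forall>j k. continuous_on UNIV (B \<epsilon> j k)"
    using B by (auto simp: eventually_at_filter)
  from filterlim_compose[OF diamond_phase_tendsto[OF this B0 B_lim] X_lim]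
  have "(\<lambda>i. diamond_phase (B (X i)) p z) \<longlonglongrightarrow> diamond_phase (B \<epsilon>0) p z" for p z .
  then show "(\<lambda>i. \<integral>\<^sup>+p. (phase_error (B \<epsilon>0) (B (X i)) h g p)^2 \<partial>lborel) \<longlonglongrightarrow> 0"
    using X B by (intro nn_integral_phase_error_square_LIMSEQ_0[OF _ B0 _ h g c2]) auto
qed

lemma diamondB_tendsto:
  fixes B :: "'e::first_countable_topology \<Rightarrow> 'n::finite \<Rightarrow> 'n \<Rightarrow> real^'n \<Rightarrow> real"
    and \<phi> :: "'e \<Rightarrow> real^'n \<Rightarrow> real^'n \<Rightarrow> complex"
  assumes B: "\<forall>\<epsilon>\<in>S. \<forall>j k. continuous_on UNIV (B \<epsilon> j k)" and \<epsilon>0: "\<epsilon>0 \<in> S"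
    and B_lim: "\<forall>j k. uniform_limit UNIV (\<lambda>\<epsilon>. B \<epsilon> j k) (B \<epsilon>0 j k) (at \<epsilon>0 within S)"
    and \<phi>: "\<forall>\<epsilon>\<in>S. in_Lfrak (\<phi> \<epsilon>)"
    and \<phi>_lim: "((\<lambda>\<epsilon>. Lfrak_norm (\<lambda>x y. \<phi> \<epsilon> x y - \<phi> \<epsilon>0 x y)) \<longlongrightarrow> 0) (at \<epsilon>0 within S)"
    and \<psi>: "in_L2 \<psi>"
  shows "((\<lambda>\<epsilon>. L2_norm_sq (\<lambda>x y. diamondB (B \<epsilon>) (\<phi> \<epsilon>) \<psi> x y - diamondB (B \<epsilon>0) (\<phi> \<epsilon>0) \<psi> x y)) \<longlongrightarrow> 0)
      (at \<epsilon>0 within S)"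
proof -
  have B0: "\<forall>j k. continuous_on UNIV (B \<epsilon>0 j k)" and \<phi>0: "in_Lfrak (\<phi> \<epsilon>0)" using B \<phi> \<epsilon>0 by auto
  obtain N0 where N0: "N0 \<in> null_sets lborel" "Lfrak_rep (\<phi> \<epsilon>0) N0 \<in> borel_measurable borel"
    using in_Lfrak_Borel_version[OF \<phi>0] .
  obtain N\<psi> where N\<psi>: "N\<psi> \<in> null_sets lborel" "L2_rep \<psi> N\<psi> \<in> borel_measurable borel"
    using in_L2_Borel_version[OF \<psi>] .
  let ?h = "fibre_sup (Lfrak_rep (\<phi> \<epsilon>0) N0)" and ?g = "L2_rep \<psi> N\<psi>"
  define phase_term where "phase_term \<epsilon> = (\<integral>\<^sup>+p. (phase_error (B \<epsilon>0) (B \<epsilon>) ?h ?g p)^2 \<partial>lborel)" for \<epsilon>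
  have hm: "?h \<in> borel_measurable borel"
    by (rule borel_measurable_fibre_sup_Lfrak_rep[OF \<phi>0 N0(2)])
  have "(phase_term \<longlongrightarrow> 0) (at \<epsilon>0 within S)"
    unfolding phase_term_def
    by (rule nn_integral_phase_error_square_tendsto_0[OF B B0 B_lim hm fibre_sup_Lfrak_rep_less_top[OF \<phi>0] N\<psi>(2)
          nn_integral_diamond_majorant_square_less_top[OF \<phi>0 \<psi> N0 N\<psi>]])
  moreover have "((\<lambda>\<epsilon>. (Lfrak_norm (\<lambda>x y. \<phi> \<epsilon> x y - \<phi> \<epsilon>0 x y))^2 * L2_norm_sq \<psi>) \<longlongrightarrow> 0^2 * L2_norm_sq \<psi>) (at \<epsilon>0 within S)"
  proof -
    have "((\<lambda>\<epsilon>. Lfrak_norm (\<lambda>x y. \<phi> \<epsilon> x y - \<phi> \<epsilon>0 x y) * Lfrak_norm (\<lambda>x y. \<phi> \<epsilon> x y - \<phi> \<epsilon>0 x y)) \<longlongrightarrow> 0 * 0)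
        (at \<epsilon>0 within S)"
      by (intro tendsto_mult_ennreal \<phi>_lim) auto
    then show ?thesis
      using \<psi> by (intro tendsto_mult_ennreal) (auto simp: power2_eq_square in_L2_def)
  qed
  ultimately have bound_lim: "((\<lambda>\<epsilon>. 2 * ((Lfrak_norm (\<lambda>x y. \<phi> \<epsilon> x y - \<phi> \<epsilon>0 x y))^2 * L2_norm_sq \<psi>) + 2 * phase_term \<epsilon>) \<longlongrightarrow> 0)
      (at \<epsilon>0 within S)"
    using tendsto_add[OF ennreal_tendsto_cmult ennreal_tendsto_cmult, of 2 _ _ _ 2] by fastforce
  have "L2_norm_sq (\<lambda>x y. diamondB (B \<epsilon>) (\<phi> \<epsilon>) \<psi> x y - diamondB (B \<epsilon>0) (\<phi> \<epsilon>0) \<psi> x y)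
      \<le> 2 * ((Lfrak_norm (\<lambda>x y. \<phi> \<epsilon> x y - \<phi> \<epsilon>0 x y))^2 * L2_norm_sq \<psi>) + 2 * phase_term \<epsilon>"
    if "\<epsilon> \<in> S" for \<epsilon>
    unfolding phase_term_def using B \<phi> that by (intro L2_norm_sq_diamondB_diff_le[OF _ B0 _ \<phi>0 \<psi> N0 N\<psi>]) auto
  then have le: "\<forall>\<^sub>F \<epsilon> in at \<epsilon>0 within S. L2_norm_sq (\<lambda>x y. diamondB (B \<epsilon>) (\<phi> \<epsilon>) \<psi> x y - diamondB (B \<epsilon>0) (\<phi> \<epsilon>0) \<psi> x y)
      \<le> 2 * ((Lfrak_norm (\<lambda>x y. \<phi> \<epsilon> x y - \<phi> \<epsilon>0 x y))^2 * L2_norm_sq \<psi>) + 2 * phase_term \<epsilon>"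
    by (auto simp: eventually_at_filter)
  show ?thesis
    by (rule tendsto_sandwich[OF _ le tendsto_const bound_lim]) simp
qed

text \<open>Of the hypotheses on \<open>B\<close> only continuity of the components and the case \<open>is = []\<close> of \<open>B_cont\<close> (uniform convergence of the fields themselves) are needed.\<close>

theorem lemma3:
  fixes a b :: real
    and B :: "real \<Rightarrow> 'n::finite \<Rightarrow> 'n \<Rightarrow> real^'n \<Rightarrow> real"
    and \<phi> :: "real \<Rightarrow> real^'n \<Rightarrow> real^'n \<Rightarrow> complex"
    and \<psi> :: "real^'n \<Rightarrow> real^'n \<Rightarrow> complex"
  assumes B_mag: "\<forall>\<epsilon>\<in>{a..b}. magnetic_field (B \<epsilon>)"
    and B_cont: "\<forall>j k is. \<forall>\<epsilon>0\<in>{a..b}. \<forall>e>0. \<exists>d>0. \<forall>\<epsilon>\<in>{a..b}. \<bar>\<epsilon> - \<epsilon>0\<bar> < d \<longrightarrow>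
                  (\<forall>x. \<bar>pd is (B \<epsilon> j k) x - pd is (B \<epsilon>0 j k) x\<bar> \<le> e)"
    and \<phi>_L: "\<forall>\<epsilon>\<in>{a..b}. in_Lfrak (\<phi> \<epsilon>)"
    and \<phi>_cont: "\<forall>\<epsilon>0\<in>{a..b}. ((\<lambda>\<epsilon>. Lfrak_norm (\<lambda>x y. \<phi> \<epsilon> x y - \<phi> \<epsilon>0 x y)) \<longlongrightarrow> 0) (at \<epsilon>0 within {a..b})"
    and \<psi>_L2: "in_L2 \<psi>"
  shows "(\<forall>\<epsilon>\<in>{a..b}. in_L2 (diamondB (B \<epsilon>) (\<phi> \<epsilon>) \<psi>)) \<and>
         (\<forall>\<epsilon>0\<in>{a..b}. ((\<lambda>\<epsilon>. L2_norm_sq (\<lambda>x y. diamondB (B \<epsilon>) (\<phi> \<epsilon>) \<psi> x y - diamondB (B \<epsilon>0) (\<phi> \<epsilon>0) \<psi> x y))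
              \<longlongrightarrow> 0) (at \<epsilon>0 within {a..b}))"
proof (intro conjI ballI)
  have B: "\<forall>\<epsilon>\<in>{a..b}. \<forall>j k. continuous_on UNIV (B \<epsilon> j k)"
    using B_mag magnetic_field_continuous by blast
  then show "in_L2 (diamondB (B \<epsilon>) (\<phi> \<epsilon>) \<psi>)" if "\<epsilon> \<in> {a..b}" for \<epsilon>
    using \<phi>_L \<psi>_L2 that by (intro in_L2_diamondB) auto
  fix \<epsilon>0 assume \<epsilon>0: "\<epsilon>0 \<in> {a..b}"
  have "\<forall>e>0. \<exists>d>0. \<forall>\<epsilon>\<in>{a..b}. \<bar>\<epsilon> - \<epsilon>0\<bar> < d \<longrightarrow> (\<forall>x. \<bar>B \<epsilon> j k x - B \<epsilon>0 j k x\<bar> \<le> e)" for j k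
    using B_cont \<epsilon>0 by (metis pd.simps(1))
  then have "\<forall>j k. uniform_limit UNIV (\<lambda>\<epsilon>. B \<epsilon> j k) (B \<epsilon>0 j k) (at \<epsilon>0 within {a..b})"
    by (blast intro: uniform_limit_at_within_real)
  with B \<epsilon>0 \<phi>_L \<phi>_cont \<psi>_L2 show "((\<lambda>\<epsilon>. L2_norm_sq (\<lambda>x y. diamondB (B \<epsilon>) (\<phi> \<epsilon>) \<psi> x y - diamondB (B \<epsilon>0) (\<phi> \<epsilon>0) \<psi> x y))
      \<longlongrightarrow> 0) (at \<epsilon>0 within {a..b})"
    by (intro diamondB_tendsto) auto
qed

end
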